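(* Let $f:\mathbb{R}^n\to\mathbb{R}$ be convex and differentiable with $\|\nabla f(x)-\nabla f(y)\|_2\le L\|x-y\|_2$ for all $x,y$, attaining its minimum $f_*$ at $x_*$. Run the mirror triangle method with inexact directional derivatives (see context) from $x_0$ with noise level $\delta$, and let $\frac12P_0^2=\frac12\|x_0-x_*\|_L^2+(1-\frac1n)(f(x_0)-f_* )$. Fix $\varepsilon>0$ and let $$N=\Big\lceil\frac{\sqrt2\,nP_0}{\sqrt\varepsilon}+1-2n\Big\rceil,$$ assumed to satisfy $N\ge1$, and suppose $$\delta\le\min\Big\{\frac{\varepsilon^{3/4}\sqrt L}{4\sqrt[4]{2}\sqrt{nP_0}},\ \frac{\varepsilon^{3/2}\sqrt L}{96\sqrt n\,P_0^2}\Big\}.$$ Then $\mathbb{E}f(x_N)-f(x_* )\le3\varepsilon$.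
   Context: $\|x\|_L^2=L\sum_{i=1}^nx_i^2$. Random directions: for each $k\ge0$, $e_{k+1}$ is a random vector on the Euclidean unit sphere of $\mathbb{R}^n$ such that, conditionally on all randomness of the previous iterations, $\mathbb{E}[e_{k+1}^ie_{k+1}^j]=0$ for $i\ne j$ and $\mathbb{E}[(e_{k+1}^i)^2]=\frac1n$ for all $i$ ($e^i$ denotes the $i$-th coordinate); $\tilde\delta_{k+1}\in\mathbb{R}$ is a random noise with $|\tilde\delta_{k+1}|\le\delta$. The oracle returns $\tilde\nabla f(y)=n(\langle\nabla f(y),e_{k+1}\rangle+\tilde\delta_{k+1})e_{k+1}$ instead of $\nabla f(y)$. Method: $x_0=u_0=y_0$, $\alpha_0=1-\frac1n$, $A_0=\alpha_0$; for $k\ge0$: $\alpha_{k+1}=\frac{k+2n}{2n^2}$, $A_{k+1}=A_k+\alpha_{k+1}$, $y_{k+1}=\frac{\alpha_{k+1}u_k+A_kx_k}{A_{k+1}}$, generate $\tilde\nabla f(y_{k+1})$, $u_{k+1}=\arg\min_{x\in\mathbb{R}^n}\{\frac12\|x-u_k\|_L^2+\alpha_{k+1}\langle\tilde\nabla f(y_{k+1}),x\rangle\}$, $x_{k+1}=y_{k+1}+n\frac{\alpha_{k+1}}{A_{k+1}}(u_{k+1}-u_k)$. *)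

theory Defs
  imports "HOL-Probability.Probability"
begin

definition normL :: "real \<Rightarrow> real^'n \<Rightarrow> real" where
  "normL L x = sqrt (L * (\<Sum>i\<in>UNIV. (x $ i)^2))"

fun mtm_alpha :: "nat \<Rightarrow> nat \<Rightarrow> real" where
  "mtm_alpha n 0 = 1 - 1 / real n"
| "mtm_alpha n (Suc k) = (real k + 2 * real n) / (2 * (real n)^2)"

definition mtm_A :: "nat \<Rightarrow> nat \<Rightarrow> real" where
  "mtm_A n k = (\<Sum>j\<le>k. mtm_alpha n j)"

definition mtm_step :: "real \<Rightarrow> (real^'n \<Rightarrow> real^'n) \<Rightarrow> nat
    \<Rightarrow> ((real^'n) \<times> (real^'n)) \<Rightarrow> real^'n \<Rightarrow> real \<Rightarrow> ((real^'n) \<times> (real^'n))" where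
  "mtm_step L gradf k s e d =
     (let n = CARD('n); x = fst s; u = snd s;
          a = mtm_alpha n (Suc k); A = mtm_A n k; A' = mtm_A n (Suc k);
          y = (1 / A') *\<^sub>R (a *\<^sub>R u + A *\<^sub>R x);
          g = (real n * (gradf y \<bullet> e + d)) *\<^sub>R e;
          u' = arg_min (\<lambda>z. 1/2 * (normL L (z - u))^2 + a * (g \<bullet> z)) (\<lambda>_. True);
          x' = y + (real n * a / A') *\<^sub>R (u' - u)
      in (x', u'))"

text \<open>State (x_k, u_k) after k iterations, for given realisations of the
  directions e_1, e_2, ... and noises delta~_1, delta~_2, ... (index 0 unused).\<close>
primrec mtm :: "real \<Rightarrow> (real^'n \<Rightarrow> real^'n) \<Rightarrow> real^'n
    \<Rightarrow> (nat \<Rightarrow> real^'n) \<Rightarrow> (nat \<Rightarrow> real) \<Rightarrow> nat \<Rightarrow> ((real^'n) \<times> (real^'n))" where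
  "mtm L gradf x0 e d 0 = (x0, x0)"
| "mtm L gradf x0 e d (Suc k) = mtm_step L gradf k (mtm L gradf x0 e d k) (e (Suc k)) (d (Suc k))"

end

theory Submission
  imports Defs
begin

text \<open>
  For every realisation of the directions and the noise, the potential
  \<open>\<Phi>\<^sub>k = A\<^sub>k (f x\<^sub>k - f\<^sub>*) + \<parallel>u\<^sub>k - x\<^sub>*\<parallel>\<^sub>L\<^sup>2 / 2\<close> obeys a one-step inequality whose only
  uncontrolled terms are a cross term, bilinear in the random direction \<open>e\<^sub>k\<^sub>+\<^sub>1\<close>, and
  noise terms of size \<open>\<delta>\<close>. Since \<open>E[e e\<^sup>T | F\<^sub>k] = I/n\<close>, the cross term has mean zero,
  and by Jensen's inequality the noise terms are at most \<open>\<delta> c\<^sub>k \<surd>(E \<Phi>\<^sub>k)\<close> plus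
  \<open>b\<^sub>k \<delta>\<^sup>2\<close>. The recursion \<open>E \<Phi>\<^sub>k\<^sub>+\<^sub>1 \<le> E \<Phi>\<^sub>k + \<delta> c\<^sub>k \<surd>(E \<Phi>\<^sub>k) + b\<^sub>k \<delta>\<^sup>2\<close> yields
  \<open>\<surd>(E \<Phi>\<^sub>N) \<le> \<surd>(E \<Phi>\<^sub>0 + \<Sum> b\<^sub>k \<delta>\<^sup>2) + \<delta>/2 \<Sum> c\<^sub>k\<close>; the choice of \<open>N\<close> and \<open>\<delta>\<close> makes
  the right-hand side at most \<open>21/20 P\<^sub>0\<close>, while \<open>A\<^sub>N \<ge> P\<^sub>0\<^sup>2/(2\<epsilon>)\<close>. Hence
  \<open>A\<^sub>N (E f x\<^sub>N - f\<^sub>*) \<le> E \<Phi>\<^sub>N \<le> 3/2 P\<^sub>0\<^sup>2 \<le> 3\<epsilon> A\<^sub>N\<close>.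
\<close>

section \<open>Convex functions with Lipschitz gradient\<close>

lemma norm_diff_scaleR_sq:
  fixes p q :: "'a::real_inner"
  shows "(norm (p - c *\<^sub>R q))^2 = (norm p)^2 - 2 * c * (p \<bullet> q) + c^2 * (norm q)^2"
  by (simp only: power2_norm_eq_inner)
    (simp add: inner_diff_left inner_diff_right inner_commute[of q p] power2_eq_square algebra_simps)

context
  fixes f :: "'a::real_inner \<Rightarrow> real" and gradf :: "'a \<Rightarrow> 'a"
  assumes grad: "\<And>x. (f has_derivative (\<lambda>h. gradf x \<bullet> h)) (at x)"
begin

lemma has_real_derivative_along_line:
  "((\<lambda>t. f (y + t *\<^sub>R h)) has_real_derivative (gradf (y + t *\<^sub>R h) \<bullet> h)) (at t)"
proof -
  have "((\<lambda>t. y + t *\<^sub>R h) has_derivative (\<lambda>s. s *\<^sub>R h)) (at t)"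
    by (auto intro!: derivative_eq_intros)
  from has_derivative_compose[OF this grad] show ?thesis
    unfolding has_field_derivative_def by (simp add: o_def mult_commute_abs)
qed

lemma convex_on_ge_linearization:
  assumes convex: "convex_on UNIV f"
  shows "f y + gradf y \<bullet> (x - y) \<le> f x"
proof -
  define \<phi> where "\<phi> t = f (y + t *\<^sub>R (x - y))" for t
  have cvx: "convex_on UNIV \<phi>"
  proof (rule convex_onI)
    fix t a b :: real assume "0 < t" "t < 1"
    have "y + ((1 - t) *\<^sub>R a + t *\<^sub>R b) *\<^sub>R (x - y)
        = (1 - t) *\<^sub>R (y + a *\<^sub>R (x - y)) + t *\<^sub>R (y + b *\<^sub>R (x - y))"
      by (simp add: algebra_simps)
    then show "\<phi> ((1 - t) *\<^sub>R a + t *\<^sub>R b) \<le> (1 - t) * \<phi> a + t * \<phi> b"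
      unfolding \<phi>_def using convex_onD[OF convex, of t] \<open>0 < t\<close> \<open>t < 1\<close> by simp
  qed simp
  have "(\<phi> has_real_derivative (gradf y \<bullet> (x - y))) (at 0)"
    unfolding \<phi>_def using has_real_derivative_along_line[of y "x - y" 0] by simp
  from convex_on_imp_above_tangent[OF cvx _ _ _ this, of 1] show ?thesis
    unfolding \<phi>_def by simp
qed

lemma convex_on_weighted_gradient_bound:
  assumes convex: "convex_on UNIV f" and "0 \<le> A" "0 \<le> \<alpha>"
    and y: "(A + \<alpha>) *\<^sub>R y = \<alpha> *\<^sub>R u + A *\<^sub>R x"
  shows "(A + \<alpha>) * (f y - f z) \<le> A * (f x - f z) + \<alpha> * (gradf y \<bullet> (u - z))"
proof -
  have "A * (f y + gradf y \<bullet> (x - y)) \<le> A * f x" "\<alpha> * (f y + gradf y \<bullet> (z - y)) \<le> \<alpha> * f z"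
    using convex_on_ge_linearization[OF convex] \<open>0 \<le> A\<close> \<open>0 \<le> \<alpha>\<close> by (simp_all add: mult_left_mono)
  moreover have "A * (gradf y \<bullet> (x - y)) + \<alpha> * (gradf y \<bullet> (z - y)) = - \<alpha> * (gradf y \<bullet> (u - z))"
  proof -
    have "A *\<^sub>R (x - y) + \<alpha> *\<^sub>R (z - y) = - \<alpha> *\<^sub>R (u - z)"
      using y by (simp add: algebra_simps)
    then show ?thesis
      by (metis inner_add_right inner_scaleR_right)
  qed
  ultimately show ?thesis by (simp add: algebra_simps)
qed

end

context
  fixes f :: "'a::real_inner \<Rightarrow> real" and gradf :: "'a \<Rightarrow> 'a" and L :: real
  assumes grad: "\<And>x. (f has_derivative (\<lambda>h. gradf x \<bullet> h)) (at x)"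
    and lip: "\<And>x y. norm (gradf x - gradf y) \<le> L * norm (x - y)"
begin

lemma lipschitz_gradient_upper_bound: "f (y + h) \<le> f y + gradf y \<bullet> h + L/2 * (norm h)^2"
proof -
  define \<phi> where "\<phi> t = f (y + t *\<^sub>R h) - t * (gradf y \<bullet> h) - L/2 * t^2 * (norm h)^2" for t
  define \<phi>' where "\<phi>' t = (gradf (y + t *\<^sub>R h) - gradf y) \<bullet> h - L * t * (norm h)^2" for t
  have "DERIV \<phi> t :> \<phi>' t" for t
    unfolding \<phi>_def \<phi>'_def inner_diff_left
    by (rule derivative_eq_intros has_real_derivative_along_line[OF grad] refl | simp)+
  then obtain t where t: "0 < t" "t < 1" "\<phi> 1 - \<phi> 0 = \<phi>' t"
    using MVT2[of 0 1 \<phi> \<phi>'] by auto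
  have "(gradf (y + t *\<^sub>R h) - gradf y) \<bullet> h \<le> norm (gradf (y + t *\<^sub>R h) - gradf y) * norm h"
    by (rule norm_cauchy_schwarz)
  also have "\<dots> \<le> L * norm (t *\<^sub>R h) * norm h"
    using lip[of "y + t *\<^sub>R h" y] by (intro mult_right_mono) auto
  also have "\<dots> = L * t * (norm h)^2"
    using t by (simp add: power2_eq_square)
  finally have "\<phi> 1 \<le> \<phi> 0"
    using t unfolding \<phi>'_def by simp
  then show ?thesis
    unfolding \<phi>_def by simp
qed

lemma lipschitz_gradient_step_decrease:
  assumes "0 < A" "0 \<le> B" "L * B \<le> A" "norm e = 1"
  shows "A * (f (y - (B * t / A) *\<^sub>R e) - f y) \<le> B * t^2 / 2 - B * t * (gradf y \<bullet> e)"
proof -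
  have "f (y + (- (B * t / A)) *\<^sub>R e) - f y \<le> - (B * t / A) * (gradf y \<bullet> e) + L/2 * (B * t / A)^2"
    using lipschitz_gradient_upper_bound[of y "- (B * t / A) *\<^sub>R e"] \<open>norm e = 1\<close>
    by (simp add: power2_eq_square)
  then have "A * (f (y - (B * t / A) *\<^sub>R e) - f y)
      \<le> A * (- (B * t / A) * (gradf y \<bullet> e) + L/2 * (B * t / A)^2)"
    using \<open>0 < A\<close> by (intro mult_left_mono) auto
  also have "\<dots> = (L * B / A) * (B * t^2) / 2 - B * t * (gradf y \<bullet> e)"
    using \<open>0 < A\<close> by (simp add: field_simps power2_eq_square)
  also have "(L * B / A) * (B * t^2) / 2 \<le> 1 * (B * t^2) / 2"
    using assms by (intro divide_right_mono mult_right_mono) auto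
  finally show ?thesis by simp
qed

lemma norm_gradient_sq_le_suboptimality:
  assumes "L > 0" and min: "\<And>x. f z \<le> f x"
  shows "(norm (gradf y))^2 \<le> 2 * L * (f y - f z)"
proof -
  have "gradf y \<bullet> gradf y = (norm (gradf y))^2"
    by (simp add: power2_norm_eq_inner)
  then have "f (y + (- (1/L) *\<^sub>R gradf y)) \<le> f y - (norm (gradf y))^2 / (2 * L)"
    using lipschitz_gradient_upper_bound[of y "- (1/L) *\<^sub>R gradf y"] \<open>L > 0\<close>
    by (simp add: power2_eq_square field_simps)
  then have "(norm (gradf y))^2 / (2 * L) \<le> f y - f z"
    using min[of "y + (- (1/L) *\<^sub>R gradf y)"] by linarith
  then show ?thesis
    using \<open>L > 0\<close> by (simp add: field_simps)
qed

lemma suboptimality_le_at_minimum: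
  assumes "L > 0" and min: "\<And>x. f z \<le> f x"
  shows "f v - f z \<le> L/2 * (norm (v - z))^2"
proof -
  have "gradf z = 0"
    using norm_gradient_sq_le_suboptimality[OF assms, of z] by simp
  then show ?thesis
    using lipschitz_gradient_upper_bound[of z "v - z"] by simp
qed

lemma norm_gradient_sq_le_potential:
  assumes convex: "convex_on UNIV f" and "L > 0" and min: "\<And>x. f z \<le> f x"
    and "0 \<le> A" "0 < \<alpha>" and y: "(A + \<alpha>) *\<^sub>R y = \<alpha> *\<^sub>R u + A *\<^sub>R x"
  shows "(norm (gradf y))^2
    \<le> 2 * L * (1 + \<alpha>) / (A + \<alpha>) * (A * (f x - f z) + L/2 * (norm (u - z))^2)"
proof -
  define c where "c = \<alpha> / (A + \<alpha>)"
  define P where "P = A * (f x - f z) + L/2 * (norm (u - z))^2"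
  have pos: "0 < A + \<alpha>" and c01: "0 \<le> c" "c \<le> 1"
    using \<open>0 \<le> A\<close> \<open>0 < \<alpha>\<close> by (auto simp: c_def)
  have Ac: "(A + \<alpha>) * (1 - c) = A" and \<alpha>c: "(A + \<alpha>) * c = \<alpha>"
    using pos by (simp_all add: c_def field_simps)
  have "(A + \<alpha>) *\<^sub>R ((1 - c) *\<^sub>R x + c *\<^sub>R u) = (A + \<alpha>) *\<^sub>R y"
    unfolding y scaleR_add_right scaleR_scaleR Ac \<alpha>c by (simp add: add.commute)
  then have "y = (1 - c) *\<^sub>R x + c *\<^sub>R u"
    using pos by simp
  then have "(A + \<alpha>) * f y \<le> (A + \<alpha>) * ((1 - c) * f x + c * f u)"
    using convex_onD[OF convex c01] pos by simp
  also have "\<dots> = A * f x + \<alpha> * f u"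
    unfolding distrib_left mult.assoc[symmetric] Ac \<alpha>c ..
  finally have "(A + \<alpha>) * (f y - f z) \<le> A * (f x - f z) + \<alpha> * (f u - f z)"
    by (simp add: algebra_simps)
  also have "\<dots> \<le> A * (f x - f z) + \<alpha> * (L/2 * (norm (u - z))^2)"
    using suboptimality_le_at_minimum[OF \<open>L > 0\<close> min, of u] \<open>0 < \<alpha>\<close> by simp
  also have "\<dots> \<le> (1 + \<alpha>) * P"
  proof -
    have "0 \<le> \<alpha> * (A * (f x - f z))" "0 \<le> L/2 * (norm (u - z))^2"
      using min[of x] \<open>0 \<le> A\<close> \<open>0 < \<alpha>\<close> \<open>L > 0\<close> by simp_all
    moreover have "(1 + \<alpha>) * P = A * (f x - f z) + \<alpha> * (L/2 * (norm (u - z))^2)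
        + (L/2 * (norm (u - z))^2 + \<alpha> * (A * (f x - f z)))"
      unfolding P_def by (simp add: algebra_simps)
    ultimately show ?thesis
      by linarith
  qed
  finally have "f y - f z \<le> (1 + \<alpha>) * P / (A + \<alpha>)"
    using pos by (simp add: field_simps)
  then have "2 * L * (f y - f z) \<le> 2 * L * ((1 + \<alpha>) * P / (A + \<alpha>))"
    using \<open>L > 0\<close> by (intro mult_left_mono) auto
  then show ?thesis
    using norm_gradient_sq_le_suboptimality[OF \<open>L > 0\<close> min, of y] unfolding P_def by simp
qed

end



section \<open>The mirror triangle method\<close>

lemma normL_sq: "0 \<le> L \<Longrightarrow> (normL L x)^2 = L * (norm x)^2"
  by (simp add: normL_def norm_vec_def L2_set_def sum_nonneg)

lemma arg_min_prox_normL: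
  fixes u g :: "real^'n"
  assumes "L > 0"
  shows "arg_min (\<lambda>z. 1/2 * (normL L (z - u))^2 + a * (g \<bullet> z)) (\<lambda>_. True) = u - (a/L) *\<^sub>R g"
proof -
  define q where "q z = 1/2 * (normL L (z - u))^2 + a * (g \<bullet> z)" for z
  define w where "w = u - (a/L) *\<^sub>R g"
  have q: "q z = q w + L/2 * (norm (z - w))^2" for z
  proof -
    have "z - u = (z - w) - (a/L) *\<^sub>R g"
      unfolding w_def by simp
    then have z: "(norm (z - u))^2 = (norm (z - w))^2 - 2 * (a/L) * (z \<bullet> g - w \<bullet> g) + (a/L)^2 * (norm g)^2"
      by (simp only: norm_diff_scaleR_sq inner_diff_left)
    have w: "(norm (w - u))^2 = (a/L)^2 * (norm g)^2"
      unfolding w_def by (simp add: power2_eq_square)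
    have "\<And>N Z W G. 1/2 * (L * (N - 2 * (a/L) * (Z - W) + (a/L)^2 * G)) + a * Z
        = 1/2 * (L * ((a/L)^2 * G)) + a * W + L/2 * N"
      using \<open>L > 0\<close> by (simp add: field_simps power2_eq_square)
    then show ?thesis
      unfolding q_def normL_sq[OF less_imp_le[OF \<open>L > 0\<close>]] z w inner_commute[of g] .
  qed
  have "q w \<le> q z" for z
    using q[of z] \<open>L > 0\<close> by simp
  then have "q (arg_min q (\<lambda>_. True)) = q w"
    by (intro arg_min_equality) auto
  then have "norm (arg_min q (\<lambda>_. True) - w) = 0"
    using q[of "arg_min q (\<lambda>_. True)"] \<open>L > 0\<close> by simp
  then show ?thesis
    unfolding q_def[abs_def] w_def by simp
qed

lemma mtm_A_Suc: "mtm_A n (Suc k) = mtm_A n k + mtm_alpha n (Suc k)"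
  by (simp add: mtm_A_def)

lemma mtm_A_eq:
  assumes "n \<ge> 1"
  shows "mtm_A n k = ((real k + 2 * real n)^2 - real k - 4 * real n) / (4 * (real n)^2)"
proof (induction k)
  case 0
  then show ?case using assms by (simp add: mtm_A_def field_simps power2_eq_square)
next
  case (Suc k)
  have "mtm_A n (Suc k) = ((real k + 2 * real n)^2 - real k - 4 * real n) / (4 * (real n)^2)
      + (real k + 2 * real n) / (2 * (real n)^2)"
    by (simp only: mtm_A_Suc Suc.IH mtm_alpha.simps)
  also have "\<dots> = ((real (Suc k) + 2 * real n)^2 - real (Suc k) - 4 * real n) / (4 * (real n)^2)"
    using assms by (simp add: field_simps power2_eq_square)
  finally show ?case .
qed

lemma mtm_alpha_Suc_pos: "n \<ge> 1 \<Longrightarrow> 0 < mtm_alpha n (Suc k)"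
  by simp

lemma mtm_A_nonneg: "n \<ge> 1 \<Longrightarrow> 0 \<le> mtm_A n k"
  unfolding mtm_A_def by (intro sum_nonneg, rename_tac j, case_tac j) auto

lemma mtm_A_Suc_pos: "n \<ge> 1 \<Longrightarrow> 0 < mtm_A n (Suc k)"
  unfolding mtm_A_Suc by (rule add_nonneg_pos[OF mtm_A_nonneg mtm_alpha_Suc_pos])

lemma mtm_alpha_sq_le_A:
  assumes "n \<ge> 1"
  shows "(real n)^2 * (mtm_alpha n (Suc k))^2 \<le> mtm_A n (Suc k)"
proof -
  have "(real n)^2 * (mtm_alpha n (Suc k))^2 = (real k + 2 * real n)^2 / (4 * (real n)^2)"
    using assms by (simp add: field_simps power2_eq_square)
  also have "\<dots> \<le> ((real (Suc k) + 2 * real n)^2 - real (Suc k) - 4 * real n) / (4 * (real n)^2)"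
    using assms by (intro divide_right_mono) (auto simp: power2_eq_square algebra_simps)
  finally show ?thesis
    using mtm_A_eq[OF assms] by simp
qed

text \<open>The point \<open>y\<^sub>k\<^sub>+\<^sub>1\<close> of the method, computed from \<open>x\<^sub>k\<close> and \<open>u\<^sub>k\<close>.\<close>

definition mtm_y :: "nat \<Rightarrow> nat \<Rightarrow> real^'n \<Rightarrow> real^'n \<Rightarrow> real^'n" where
  "mtm_y n k x u = (1 / mtm_A n (Suc k)) *\<^sub>R (mtm_alpha n (Suc k) *\<^sub>R u + mtm_A n k *\<^sub>R x)"

lemma mtm_step_eq:
  fixes gradf :: "real^'n \<Rightarrow> real^'n" and k :: nat and x u e :: "real^'n" and d :: real
  assumes "L > 0"
  defines "n \<equiv> real CARD('n)" and "\<alpha> \<equiv> mtm_alpha CARD('n) (Suc k)"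
    and "A' \<equiv> mtm_A CARD('n) (Suc k)" and "y \<equiv> mtm_y CARD('n) k x u"
  defines "t \<equiv> gradf y \<bullet> e + d"
  shows "mtm_step L gradf k (x, u) e d
    = (y - (n^2 * \<alpha>^2 / L * t / A') *\<^sub>R e, u - (\<alpha> * n * t / L) *\<^sub>R e)"
proof -
  have "(n * \<alpha> / A') *\<^sub>R ((\<alpha> / L) *\<^sub>R ((n * t) *\<^sub>R e)) = (n^2 * \<alpha>^2 / L * t / A') *\<^sub>R e"
    by (simp add: power2_eq_square ac_simps)
  then show ?thesis
    unfolding mtm_step_def Let_def arg_min_prox_normL[OF assms(1)]
    by (simp add: assms(2-) mtm_y_def mult.commute[of _ "real CARD('n)"] mult.assoc)
qed

lemma mtm_step_potential_le_exact:
  fixes f :: "real^'n \<Rightarrow> real" and gradf :: "real^'n \<Rightarrow> real^'n"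
    and k :: nat and x u z e :: "real^'n" and d :: real
  assumes "L > 0" and convex: "convex_on UNIV f"
    and grad: "\<And>x. (f has_derivative (\<lambda>h. gradf x \<bullet> h)) (at x)"
    and lip: "\<And>x y. norm (gradf x - gradf y) \<le> L * norm (x - y)"
    and e: "norm e = 1"
  defines "n \<equiv> real CARD('n)" and "\<alpha> \<equiv> mtm_alpha CARD('n) (Suc k)"
    and "A \<equiv> mtm_A CARD('n) k" and "A' \<equiv> mtm_A CARD('n) (Suc k)" and "y \<equiv> mtm_y CARD('n) k x u"
  defines "B \<equiv> n^2 * \<alpha>^2 / L" and "s \<equiv> gradf y \<bullet> e"
  shows "A' * (f (fst (mtm_step L gradf k (x, u) e d)) - f z)
        + L/2 * (norm (snd (mtm_step L gradf k (x, u) e d) - z))^2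
      \<le> A * (f x - f z) + L/2 * (norm (u - z))^2
        + \<alpha> * (gradf y \<bullet> (u - z)) - \<alpha> * n * s * (e \<bullet> (u - z))
        - \<alpha> * n * d * (e \<bullet> (u - z)) + B * (s * d) + B * d^2"
proof -
  define t where "t = s + d"
  define w where "w = u - z"
  have n1: "CARD('n) \<ge> 1"
    by (simp add: Suc_leI)
  have "0 < A'" "0 \<le> A" "0 < \<alpha>" "A' = A + \<alpha>" "0 \<le> B"
    using mtm_A_Suc_pos[OF n1] mtm_A_nonneg[OF n1] mtm_alpha_Suc_pos[OF n1] \<open>L > 0\<close>
    by (simp_all add: A'_def A_def \<alpha>_def B_def mtm_A_Suc)
  have "L * B \<le> A'"
    using mtm_alpha_sq_le_A[OF n1, of k] \<open>L > 0\<close> by (simp add: B_def n_def \<alpha>_def A'_def)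
  have step: "mtm_step L gradf k (x, u) e d = (y - (B * t / A') *\<^sub>R e, u - (\<alpha> * n * t / L) *\<^sub>R e)"
    unfolding mtm_step_eq[OF \<open>L > 0\<close>] by (simp add: B_def t_def s_def y_def n_def \<alpha>_def A'_def)
  have "A' * (f (y - (B * t / A') *\<^sub>R e) - f y) \<le> B * t^2 / 2 - B * t * s"
    using lipschitz_gradient_step_decrease[OF grad lip \<open>0 < A'\<close> \<open>0 \<le> B\<close> \<open>L * B \<le> A'\<close> e]
    by (simp add: s_def)
  moreover have "A' * (f y - f z) \<le> A * (f x - f z) + \<alpha> * (gradf y \<bullet> w)"
  proof -
    have "A' *\<^sub>R y = \<alpha> *\<^sub>R u + A *\<^sub>R x"
      using \<open>0 < A'\<close> by (simp add: y_def mtm_y_def A'_def A_def \<alpha>_def)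
    then show ?thesis
      using convex_on_weighted_gradient_bound[OF grad convex \<open>0 \<le> A\<close> less_imp_le[OF \<open>0 < \<alpha>\<close>]]
      by (simp add: \<open>A' = A + \<alpha>\<close> w_def)
  qed
  moreover have "L/2 * (norm (u - (\<alpha> * n * t / L) *\<^sub>R e - z))^2
      = L/2 * (norm w)^2 - \<alpha> * n * t * (e \<bullet> w) + B * t^2 / 2"
  proof -
    have uw: "u - (\<alpha> * n * t / L) *\<^sub>R e - z = w - (\<alpha> * n * t / L) *\<^sub>R e"
      by (simp add: w_def)
    show ?thesis
      using e \<open>L > 0\<close> unfolding uw norm_diff_scaleR_sq
      by (simp add: B_def inner_commute field_simps power2_eq_square)
  qed
  moreover have "B * t^2 / 2 - B * t * s + B * t^2 / 2 = B * (s * d) + B * d^2"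
    and "\<alpha> * n * t * (e \<bullet> w) = \<alpha> * n * s * (e \<bullet> w) + \<alpha> * n * d * (e \<bullet> w)"
    by (simp_all add: t_def power2_eq_square algebra_simps)
  ultimately show ?thesis
    unfolding step fst_conv snd_conv w_def[symmetric] by argo
qed

lemma mtm_step_potential_le:
  fixes f :: "real^'n \<Rightarrow> real" and gradf :: "real^'n \<Rightarrow> real^'n"
    and k :: nat and x u z e :: "real^'n" and d \<delta> :: real
  assumes "L > 0" and "convex_on UNIV f"
    and "\<And>x. (f has_derivative (\<lambda>h. gradf x \<bullet> h)) (at x)"
    and "\<And>x y. norm (gradf x - gradf y) \<le> L * norm (x - y)"
    and "norm e = 1" and d: "\<bar>d\<bar> \<le> \<delta>"
  defines "n \<equiv> real CARD('n)" and "\<alpha> \<equiv> mtm_alpha CARD('n) (Suc k)"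
    and "A \<equiv> mtm_A CARD('n) k" and "A' \<equiv> mtm_A CARD('n) (Suc k)" and "y \<equiv> mtm_y CARD('n) k x u"
  defines "B \<equiv> n^2 * \<alpha>^2 / L" and "s \<equiv> gradf y \<bullet> e"
  shows "A' * (f (fst (mtm_step L gradf k (x, u) e d)) - f z)
        + L/2 * (norm (snd (mtm_step L gradf k (x, u) e d) - z))^2
      \<le> A * (f x - f z) + L/2 * (norm (u - z))^2
        + \<alpha> * (gradf y \<bullet> (u - z)) - \<alpha> * n * s * (e \<bullet> (u - z))
        + \<alpha> * n * \<delta> * \<bar>e \<bullet> (u - z)\<bar> + B * \<delta> * \<bar>s\<bar> + B * \<delta>^2"
proof -
  have "0 \<le> \<alpha> * n" "0 \<le> B"
    using mtm_alpha_Suc_pos[of "CARD('n)" k] \<open>L > 0\<close> by (simp_all add: Suc_leI \<alpha>_def n_def B_def)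
  have dv: "\<bar>d * v\<bar> \<le> \<delta> * \<bar>v\<bar>" for v
    using d by (simp add: abs_mult mult_right_mono)
  have "\<alpha> * n * (- (d * (e \<bullet> (u - z)))) \<le> \<alpha> * n * (\<delta> * \<bar>e \<bullet> (u - z)\<bar>)"
    using \<open>0 \<le> \<alpha> * n\<close> dv[of "e \<bullet> (u - z)"] by (intro mult_left_mono) auto
  then have "- (\<alpha> * n * d * (e \<bullet> (u - z))) \<le> \<alpha> * n * \<delta> * \<bar>e \<bullet> (u - z)\<bar>"
    by (simp add: mult.assoc)
  moreover have "B * (s * d) \<le> B * (\<delta> * \<bar>s\<bar>)"
    using \<open>0 \<le> B\<close> dv[of s] by (intro mult_left_mono) (auto simp: mult.commute)
  then have "n^2 * \<alpha>^2 / L * (s * d) \<le> n^2 * \<alpha>^2 / L * \<delta> * \<bar>s\<bar>"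
    by (simp add: B_def mult.assoc)
  moreover have "n^2 * \<alpha>^2 / L * d^2 \<le> n^2 * \<alpha>^2 / L * \<delta>^2"
    using \<open>0 \<le> B\<close> d abs_le_square_iff[of d \<delta>] unfolding B_def by (intro mult_left_mono) auto
  ultimately show ?thesis
    using mtm_step_potential_le_exact[OF assms(1-5), where k=k and x=x and u=u and z=z and d=d,
        folded n_def \<alpha>_def A_def A'_def y_def s_def]
    unfolding B_def by linarith
qed

section \<open>Arithmetic of the step sizes\<close>

lemma sqrt_le_of_recurrence:
  fixes a b c :: "nat \<Rightarrow> real"
  assumes "\<And>k. 0 \<le> a k" "\<And>k. 0 \<le> b k" "\<And>k. 0 \<le> c k" "0 \<le> \<delta>"
    and step: "\<And>k. a (Suc k) \<le> a k + \<delta> * c k * sqrt (a k) + b k"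
  shows "sqrt (a N) \<le> sqrt (a 0 + (\<Sum>k<N. b k)) + \<delta>/2 * (\<Sum>k<N. c k)"
proof (induction N)
  case (Suc N)
  define S where "S = a 0 + (\<Sum>k<N. b k)"
  define D where "D = \<delta>/2 * (\<Sum>k<N. c k)"
  have "0 \<le> S" "0 \<le> D" "0 \<le> \<delta> * c N" "sqrt S \<le> sqrt (S + b N)"
    using assms by (simp_all add: S_def D_def sum_nonneg)
  have IH: "sqrt (a N) \<le> sqrt S + D"
    using Suc unfolding S_def D_def .
  then have "(sqrt (a N))^2 \<le> (sqrt S + D)^2"
    using assms(1) by (intro power_mono) auto
  then have "a N \<le> (sqrt S + D)^2"
    using assms(1)[of N] by simp
  then have "a (Suc N) \<le> (sqrt S + D)^2 + \<delta> * c N * (sqrt S + D) + b N"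
    using step[of N] IH \<open>0 \<le> \<delta> * c N\<close> mult_left_mono[OF IH \<open>0 \<le> \<delta> * c N\<close>] by linarith
  also have "\<dots> \<le> (sqrt (S + b N) + D + \<delta> * c N / 2)^2"
  proof -
    have "sqrt S * D \<le> sqrt (S + b N) * D" "sqrt S * (\<delta> * c N) \<le> sqrt (S + b N) * (\<delta> * c N)"
      using \<open>sqrt S \<le> sqrt (S + b N)\<close> \<open>0 \<le> D\<close> \<open>0 \<le> \<delta> * c N\<close> by (simp_all add: mult_right_mono)
    moreover have "(sqrt (S + b N))^2 = S + b N" "(sqrt S)^2 = S"
      using \<open>0 \<le> S\<close> assms(2)[of N] by simp_all
    ultimately show ?thesis
      using zero_le_power2[of "\<delta> * c N"] by (simp add: power2_eq_square algebra_simps)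
  qed
  finally have "sqrt (a (Suc N)) \<le> sqrt (S + b N) + D + \<delta> * c N / 2"
    using \<open>0 \<le> S\<close> \<open>0 \<le> D\<close> \<open>0 \<le> \<delta> * c N\<close> assms(2)[of N] by (intro real_le_lsqrt) auto
  then show ?case
    by (simp add: S_def D_def algebra_simps)
qed simp

lemma mtm_noise_coefficient_le:
  fixes n k :: nat and L :: real
  assumes "n \<ge> 1" "L > 0"
  defines "\<alpha> \<equiv> mtm_alpha n (Suc k)" and "A' \<equiv> mtm_A n (Suc k)"
  shows "\<alpha> * real n * sqrt (2 / (L * real n))
      + (real n)^2 * \<alpha>^2 / L * sqrt (2 * L * (1 + \<alpha>) / (A' * real n))
    \<le> 2 * \<alpha> * sqrt (2 * real n * (1 + \<alpha>) / L)"
proof -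
  have "0 < \<alpha>" "0 < A'" "(real n)^2 * \<alpha>^2 \<le> A'" "real n > 0"
    using mtm_alpha_Suc_pos mtm_A_Suc_pos mtm_alpha_sq_le_A \<open>n \<ge> 1\<close>
    by (auto simp: \<alpha>_def A'_def)
  have "real n * sqrt (2 / (L * real n)) = sqrt ((real n)^2 * (2 / (L * real n)))"
    by (subst real_sqrt_mult) simp
  also have "\<dots> \<le> sqrt (2 * real n * (1 + \<alpha>) / L)"
    using \<open>real n > 0\<close> \<open>L > 0\<close> \<open>0 < \<alpha>\<close>
    by (intro real_sqrt_le_mono) (simp add: field_simps power2_eq_square)
  finally have 1: "\<alpha> * real n * sqrt (2 / (L * real n)) \<le> \<alpha> * sqrt (2 * real n * (1 + \<alpha>) / L)"
    using \<open>0 < \<alpha>\<close> by (simp add: mult.assoc)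
  define B where "B = (real n)^2 * \<alpha>^2 / L"
  have "0 \<le> B"
    using \<open>L > 0\<close> by (simp add: B_def)
  then have "B * sqrt (2 * L * (1 + \<alpha>) / (A' * real n)) = sqrt (B^2 * (2 * L * (1 + \<alpha>) / (A' * real n)))"
    by (subst real_sqrt_mult) simp
  also have "\<dots> \<le> sqrt (\<alpha>^2 * (2 * real n * (1 + \<alpha>) / L))"
  proof (rule real_sqrt_le_mono)
    have "B^2 * (2 * L * (1 + \<alpha>) / (A' * real n))
        = ((real n)^2 * \<alpha>^2) * (\<alpha>^2 * (2 * real n * (1 + \<alpha>) / L)) / A'"
      using \<open>L > 0\<close> \<open>real n > 0\<close> \<open>0 < A'\<close> by (simp add: B_def field_simps power2_eq_square)
    also have "\<dots> \<le> A' * (\<alpha>^2 * (2 * real n * (1 + \<alpha>) / L)) / A'"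
      using \<open>(real n)^2 * \<alpha>^2 \<le> A'\<close> \<open>0 < \<alpha>\<close> \<open>L > 0\<close> \<open>0 < A'\<close>
      by (intro divide_right_mono mult_right_mono) auto
    finally show "B^2 * (2 * L * (1 + \<alpha>) / (A' * real n)) \<le> \<alpha>^2 * (2 * real n * (1 + \<alpha>) / L)"
      using \<open>0 < A'\<close> by simp
  qed
  also have "\<dots> = \<alpha> * sqrt (2 * real n * (1 + \<alpha>) / L)"
    using \<open>0 < \<alpha>\<close> by (subst real_sqrt_mult) simp
  finally have 2: "B * sqrt (2 * L * (1 + \<alpha>) / (A' * real n)) \<le> \<alpha> * sqrt (2 * real n * (1 + \<alpha>) / L)" .
  from 1 2 show ?thesis
    by (simp add: B_def)
qed

lemma sum_shifted_squares_le:
  fixes c :: real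
  assumes "0 \<le> c"
  shows "(\<Sum>k<N. (real k + c)^2) \<le> ((real N + c)^3 - c^3) / 3"
proof (induction N)
  case (Suc N)
  then show ?case
    using assms by (simp add: power3_eq_cube power2_eq_square algebra_simps)
qed simp

lemma mtm_sum_alpha_le:
  assumes "n \<ge> 1"
  shows "(\<Sum>k<N. mtm_alpha n (Suc k)) \<le> (real N + 2 * real n)^2 / (4 * (real n)^2)"
proof -
  have "mtm_A n N = mtm_alpha n 0 + (\<Sum>k<N. mtm_alpha n (Suc k))"
    unfolding mtm_A_def lessThan_Suc_atMost[symmetric] sum.lessThan_Suc_shift ..
  moreover have "0 \<le> mtm_alpha n 0"
    using assms by simp
  moreover have "mtm_A n N \<le> (real N + 2 * real n)^2 / (4 * (real n)^2)"
    unfolding mtm_A_eq[OF assms] using assms by (intro divide_right_mono) auto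
  ultimately show ?thesis
    by linarith
qed

lemma mtm_sum_alpha_sq_le:
  assumes "n \<ge> 1"
  shows "(\<Sum>k<N. (real n)^2 * (mtm_alpha n (Suc k))^2) \<le> (real N + 2 * real n)^3 / (12 * (real n)^2)"
proof -
  have "(\<Sum>k<N. (real n)^2 * (mtm_alpha n (Suc k))^2) = (\<Sum>k<N. (real k + 2 * real n)^2) / (4 * (real n)^2)"
    unfolding sum_divide_distrib using assms by (intro sum.cong) (auto simp: field_simps power2_eq_square)
  also have "\<dots> \<le> ((real N + 2 * real n)^3 - (2 * real n)^3) / 3 / (4 * (real n)^2)"
    by (intro divide_right_mono sum_shifted_squares_le) auto
  also have "\<dots> \<le> (real N + 2 * real n)^3 / (12 * (real n)^2)"
    using assms by (simp add: divide_right_mono)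
  finally show ?thesis .
qed

lemma mtm_sum_noise_coefficient_le:
  fixes n N :: nat
  assumes "n \<ge> 1" "L > 0"
  defines "S \<equiv> real N + 2 * real n"
  shows "(\<Sum>k<N. 2 * mtm_alpha n (Suc k) * sqrt (2 * real n * (1 + mtm_alpha n (Suc k)) / L))
    \<le> 2 * sqrt (2 * real n * (1 + S / (2 * (real n)^2)) / L) * (S^2 / (4 * (real n)^2))"
proof -
  have "2 * a * sqrt (2 * real n * (1 + a) / L) \<le> a * (2 * sqrt (2 * real n * (1 + S / (2 * (real n)^2)) / L))"
    if "0 \<le> a" "a \<le> S / (2 * (real n)^2)" for a
  proof -
    have "sqrt (2 * real n * (1 + a) / L) \<le> sqrt (2 * real n * (1 + S / (2 * (real n)^2)) / L)"
      using that assms by (intro real_sqrt_le_mono divide_right_mono mult_left_mono) auto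
    then show ?thesis
      using that by (simp add: mult_left_mono)
  qed
  moreover have "0 \<le> mtm_alpha n (Suc k)" "mtm_alpha n (Suc k) \<le> S / (2 * (real n)^2)" if "k < N" for k
    using that assms(1) by (simp_all add: S_def divide_right_mono)
  ultimately have "(\<Sum>k<N. 2 * mtm_alpha n (Suc k) * sqrt (2 * real n * (1 + mtm_alpha n (Suc k)) / L))
      \<le> (\<Sum>k<N. mtm_alpha n (Suc k) * (2 * sqrt (2 * real n * (1 + S / (2 * (real n)^2)) / L)))"
    by (intro sum_mono) (simp del: mtm_alpha.simps)
  also have "\<dots> \<le> 2 * sqrt (2 * real n * (1 + S / (2 * (real n)^2)) / L) * (S^2 / (4 * (real n)^2))"
    unfolding sum_distrib_right[symmetric] S_def using mtm_sum_alpha_le[OF assms(1), of N] assms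
    by (subst mult.commute) (intro mult_left_mono; simp)
  finally show ?thesis .
qed

lemma mtm_horizon_bounds:
  fixes n N :: nat and \<epsilon> P :: real
  assumes "n \<ge> 1" "N \<ge> 1" "\<epsilon> > 0" "P > 0"
    and "sqrt 2 * real n * P / sqrt \<epsilon> + 1 - 2 * real n \<le> real N"
    and "real N < sqrt 2 * real n * P / sqrt \<epsilon> + 2 - 2 * real n"
  shows "P^2 / (2 * \<epsilon>) \<le> mtm_A n N"
    and "sqrt \<epsilon> * (real N + 2 * real n) \<le> 3 * sqrt 2 * real n * P"
    and "sqrt \<epsilon> < sqrt 2 * P"
proof -
  define T where "T = sqrt 2 * real n * P / sqrt \<epsilon>"
  define S where "S = real N + 2 * real n"
  have "0 < T" "T + 1 \<le> S" "S < T + 2" "1 \<le> real n"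
    using assms by (simp_all add: T_def S_def)
  have "T^2 = 2 * (real n)^2 * P^2 / \<epsilon>"
    using \<open>\<epsilon> > 0\<close> by (simp add: T_def power_divide power_mult_distrib)
  moreover have "T^2 \<le> (S - 1)^2"
    using \<open>0 < T\<close> \<open>T + 1 \<le> S\<close> by (intro power_mono) auto
  moreover have "(S - 1)^2 \<le> S^2 - S - 2 * real n"
    using \<open>N \<ge> 1\<close> by (simp add: S_def power2_eq_square algebra_simps)
  ultimately have "2 * (real n)^2 * P^2 / \<epsilon> / (4 * (real n)^2) \<le> (S^2 - S - 2 * real n) / (4 * (real n)^2)"
    using \<open>1 \<le> real n\<close> by (intro divide_right_mono) auto
  then show "P^2 / (2 * \<epsilon>) \<le> mtm_A n N"
    using \<open>1 \<le> real n\<close> unfolding mtm_A_eq[OF \<open>n \<ge> 1\<close>]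
    by (simp add: S_def power2_eq_square field_simps)
  have "S < 3 * T"
    using \<open>S < T + 2\<close> \<open>N \<ge> 1\<close> \<open>1 \<le> real n\<close> by (simp add: S_def)
  then have "sqrt \<epsilon> * S \<le> sqrt \<epsilon> * (3 * T)"
    using \<open>\<epsilon> > 0\<close> by simp
  then show "sqrt \<epsilon> * (real N + 2 * real n) \<le> 3 * sqrt 2 * real n * P"
    using \<open>\<epsilon> > 0\<close> by (simp add: S_def T_def)
  have "real n < T"
    using \<open>S < T + 2\<close> \<open>N \<ge> 1\<close> \<open>1 \<le> real n\<close> by (simp add: S_def)
  then have "real n * sqrt \<epsilon> < sqrt 2 * real n * P"
    using \<open>\<epsilon> > 0\<close> by (simp add: T_def field_simps)
  then show "sqrt \<epsilon> < sqrt 2 * P"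
    using \<open>1 \<le> real n\<close> by (simp add: mult.assoc mult.commute[of "real n"])
qed

lemma mtm_quadratic_noise_le:
  fixes n N :: nat
  assumes "n \<ge> 1" "L > 0" "\<epsilon> > 0" "P > 0"
    and horizon: "sqrt \<epsilon> * (real N + 2 * real n) \<le> 3 * sqrt 2 * real n * P"
    and \<delta>: "\<delta>^2 \<le> \<epsilon> * sqrt \<epsilon> * L / (16 * sqrt 2 * real n * P)"
  shows "(\<Sum>k<N. (real n)^2 * (mtm_alpha n (Suc k))^2 / L * \<delta>^2) \<le> 9/32 * P^2"
proof -
  define r where "r = sqrt \<epsilon>"
  define S where "S = real N + 2 * real n"
  have "0 < r" "r^2 = \<epsilon>" "1 \<le> real n" "0 \<le> r * S"
    using assms by (simp_all add: r_def S_def)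
  have "(\<Sum>k<N. (real n)^2 * (mtm_alpha n (Suc k))^2 / L * \<delta>^2)
      = \<delta>^2 / L * (\<Sum>k<N. (real n)^2 * (mtm_alpha n (Suc k))^2)"
    by (simp add: sum_distrib_left mult.commute)
  also have "\<dots> \<le> \<delta>^2 / L * (S^3 / (12 * (real n)^2))"
    using mtm_sum_alpha_sq_le[OF \<open>n \<ge> 1\<close>] \<open>L > 0\<close> by (intro mult_left_mono) (auto simp: S_def)
  also have "\<dots> \<le> (\<epsilon> * sqrt \<epsilon> * L / (16 * sqrt 2 * real n * P)) / L * (S^3 / (12 * (real n)^2))"
    using \<delta> \<open>L > 0\<close> \<open>0 \<le> r * S\<close> \<open>0 < r\<close>
    by (intro mult_right_mono divide_right_mono) (auto simp: zero_le_mult_iff)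
  also have "\<dots> = (r * S)^3 / (192 * sqrt 2 * (real n)^3 * P)"
    using \<open>L > 0\<close> \<open>1 \<le> real n\<close> \<open>P > 0\<close> \<open>0 < r\<close>
    by (simp add: \<open>r^2 = \<epsilon>\<close>[symmetric] r_def[symmetric] field_simps power2_eq_square power3_eq_cube)
  also have "\<dots> \<le> (3 * sqrt 2 * real n * P)^3 / (192 * sqrt 2 * (real n)^3 * P)"
    using horizon \<open>0 \<le> r * S\<close> \<open>1 \<le> real n\<close> \<open>P > 0\<close>
    by (intro divide_right_mono power_mono) (auto simp: r_def S_def)
  also have "\<dots> = 9/32 * P^2"
    using \<open>1 \<le> real n\<close> \<open>P > 0\<close> by (simp add: field_simps power2_eq_square power3_eq_cube)
  finally show ?thesis .
qed

lemma mtm_horizon_sqrt_bound: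
  fixes n N :: nat
  assumes "n \<ge> 1" "\<epsilon> > 0" "P > 0"
    and horizon: "sqrt \<epsilon> * (real N + 2 * real n) \<le> 3 * sqrt 2 * real n * P" "sqrt \<epsilon> < sqrt 2 * P"
  shows "sqrt \<epsilon> * sqrt (2 * (1 + (real N + 2 * real n) / (2 * (real n)^2))) \<le> 16/5 * P"
proof -
  define r where "r = sqrt \<epsilon>"
  define S where "S = real N + 2 * real n"
  define Z where "Z = 1 + S / (2 * (real n)^2)"
  have "0 < r" "1 \<le> real n" "0 \<le> r * S" "1 \<le> Z"
    using assms by (simp_all add: r_def S_def Z_def)
  have "r^2 * Z = r^2 + r * (r * S) / (2 * (real n)^2)"
    using \<open>1 \<le> real n\<close> by (simp add: Z_def field_simps power2_eq_square)
  also have "\<dots> \<le> (sqrt 2 * P)^2 + (sqrt 2 * P) * (3 * sqrt 2 * real n * P) / (2 * (real n)^2)"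
  proof -
    have "r * (r * S) \<le> (sqrt 2 * P) * (3 * sqrt 2 * real n * P)"
      using horizon \<open>0 < r\<close> \<open>0 \<le> r * S\<close> \<open>P > 0\<close> by (rule_tac mult_mono) (auto simp: r_def S_def)
    then show ?thesis
      using horizon \<open>0 < r\<close> by (intro add_mono power_mono divide_right_mono) (auto simp: r_def)
  qed
  also have "\<dots> \<le> 5 * P^2"
    using \<open>1 \<le> real n\<close> \<open>P > 0\<close> by (simp add: field_simps power2_eq_square)
  finally have "r^2 * Z \<le> 5 * P^2" .
  moreover have "(16/5 * P)^2 = 256/25 * P^2"
    by (simp add: power2_eq_square)
  ultimately have "2 * (r^2 * Z) \<le> (16/5 * P)^2"
    using zero_le_power2[of P] by linarith
  then have "sqrt (2 * (r^2 * Z)) \<le> 16/5 * P"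
    using \<open>P > 0\<close> by (intro real_le_lsqrt) auto
  moreover have "r * sqrt (2 * Z) = sqrt (2 * (r^2 * Z))"
    using \<open>0 < r\<close> \<open>1 \<le> Z\<close> by (simp add: real_sqrt_mult)
  ultimately show ?thesis
    by (simp add: r_def Z_def S_def)
qed

lemma mtm_linear_noise_le:
  fixes n N :: nat
  assumes "n \<ge> 1" "L > 0" "\<epsilon> > 0" "P > 0" "0 \<le> \<delta>"
    and horizon: "sqrt \<epsilon> * (real N + 2 * real n) \<le> 3 * sqrt 2 * real n * P" "sqrt \<epsilon> < sqrt 2 * P"
    and \<delta>: "\<delta> \<le> \<epsilon> * sqrt \<epsilon> * sqrt L / (96 * sqrt (real n) * P^2)"
  shows "\<delta>/2 * (\<Sum>k<N. 2 * mtm_alpha n (Suc k) * sqrt (2 * real n * (1 + mtm_alpha n (Suc k)) / L))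
    \<le> 3/20 * P"
proof -
  define r where "r = sqrt \<epsilon>"
  define S where "S = real N + 2 * real n"
  define Z where "Z = 1 + S / (2 * (real n)^2)"
  have "0 < r" "r^2 = \<epsilon>" "1 \<le> real n" "0 \<le> r * S" "1 \<le> Z"
    using assms by (simp_all add: r_def S_def Z_def)
  have "\<delta>/2 * (\<Sum>k<N. 2 * mtm_alpha n (Suc k) * sqrt (2 * real n * (1 + mtm_alpha n (Suc k)) / L))
      \<le> \<delta>/2 * (2 * sqrt (2 * real n * Z / L) * (S^2 / (4 * (real n)^2)))"
    using mtm_sum_noise_coefficient_le[OF \<open>n \<ge> 1\<close> \<open>L > 0\<close>, of N] \<open>0 \<le> \<delta>\<close>
    by (intro mult_left_mono) (auto simp: S_def Z_def)
  also have "\<dots> = \<delta> * (sqrt (2 * real n * Z / L) * (S^2 / (4 * (real n)^2)))"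
    by simp
  also have "\<dots> \<le> (\<epsilon> * sqrt \<epsilon> * sqrt L / (96 * sqrt (real n) * P^2)) * (sqrt (2 * real n * Z / L) * (S^2 / (4 * (real n)^2)))"
    using \<open>1 \<le> real n\<close> \<open>1 \<le> Z\<close> \<open>L > 0\<close> by (intro mult_right_mono[OF \<delta>]) auto
  also have "\<dots> = r * (r * S)^2 * sqrt (2 * Z) / (384 * (real n)^2 * P^2)"
  proof -
    have "sqrt L * sqrt (2 * real n * Z / L) = sqrt (real n) * sqrt (2 * Z)"
      using \<open>L > 0\<close> by (simp add: real_sqrt_mult[symmetric] field_simps)
    then show ?thesis
      using \<open>1 \<le> real n\<close> \<open>P > 0\<close> \<open>0 < r\<close>
      by (simp add: \<open>r^2 = \<epsilon>\<close>[symmetric] r_def[symmetric] field_simps power2_eq_square)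
  qed
  also have "\<dots> \<le> r * (3 * sqrt 2 * real n * P)^2 * sqrt (2 * Z) / (384 * (real n)^2 * P^2)"
    using horizon \<open>0 \<le> r * S\<close> \<open>0 < r\<close> \<open>1 \<le> Z\<close>
    by (intro divide_right_mono mult_right_mono mult_left_mono power_mono) (auto simp: r_def S_def)
  also have "\<dots> = 3/64 * (r * sqrt (2 * Z))"
    using \<open>1 \<le> real n\<close> \<open>P > 0\<close> by (simp add: field_simps power2_eq_square)
  also have "r * sqrt (2 * Z) \<le> 16/5 * P"
    using mtm_horizon_sqrt_bound[OF \<open>n \<ge> 1\<close> \<open>\<epsilon> > 0\<close> \<open>P > 0\<close> horizon] by (simp add: r_def Z_def S_def)
  finally show ?thesis
    by simp
qed

lemma mtm_potential_bound:
  fixes n N :: nat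
  assumes "n \<ge> 1" "N \<ge> 1" "L > 0" "\<epsilon> > 0" "P > 0" "0 \<le> \<delta>"
    and "sqrt 2 * real n * P / sqrt \<epsilon> + 1 - 2 * real n \<le> real N"
    and "real N < sqrt 2 * real n * P / sqrt \<epsilon> + 2 - 2 * real n"
    and "\<delta>^2 \<le> \<epsilon> * sqrt \<epsilon> * L / (16 * sqrt 2 * real n * P)"
    and "\<delta> \<le> \<epsilon> * sqrt \<epsilon> * sqrt L / (96 * sqrt (real n) * P^2)"
  shows "sqrt (P^2/2 + (\<Sum>k<N. (real n)^2 * (mtm_alpha n (Suc k))^2 / L * \<delta>^2))
      + \<delta>/2 * (\<Sum>k<N. 2 * mtm_alpha n (Suc k) * sqrt (2 * real n * (1 + mtm_alpha n (Suc k)) / L))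
    \<le> 21/20 * P"
proof -
  note horizon = mtm_horizon_bounds(2,3)[OF assms(1,2,4,5,7,8)]
  have "(9/10 * P)^2 = 81/100 * P^2"
    by (simp add: power2_eq_square)
  then have "P^2/2 + (\<Sum>k<N. (real n)^2 * (mtm_alpha n (Suc k))^2 / L * \<delta>^2) \<le> (9/10 * P)^2"
    using mtm_quadratic_noise_le[OF assms(1,3,4,5) horizon(1) assms(9)] zero_le_power2[of P]
    by linarith
  then have "sqrt (P^2/2 + (\<Sum>k<N. (real n)^2 * (mtm_alpha n (Suc k))^2 / L * \<delta>^2)) \<le> 9/10 * P"
    using \<open>P > 0\<close> by (intro real_le_lsqrt) (auto intro!: add_nonneg_nonneg sum_nonneg)
  then show ?thesis
    using mtm_linear_noise_le[OF assms(1,3,4,5,6) horizon assms(10)] by simp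
qed

lemma noise_level_bounds:
  fixes n :: nat and \<epsilon> L P \<delta> :: real
  assumes "\<epsilon> > 0" "L > 0" "P > 0" "0 \<le> \<delta>"
    and \<delta>: "\<delta> \<le> min (\<epsilon> powr (3/4) * sqrt L / (4 * root 4 2 * sqrt (real n * P)))
                   (\<epsilon> powr (3/2) * sqrt L / (96 * sqrt (real n) * P^2))"
  shows "\<delta>^2 \<le> \<epsilon> * sqrt \<epsilon> * L / (16 * sqrt 2 * real n * P)"
    and "\<delta> \<le> \<epsilon> * sqrt \<epsilon> * sqrt L / (96 * sqrt (real n) * P^2)"
proof -
  have "\<epsilon> powr (3/2) = \<epsilon> powr (1 + 1/2)"
    by simp
  also have "\<dots> = \<epsilon> * sqrt \<epsilon>"
    using \<open>\<epsilon> > 0\<close> by (subst powr_add) (simp add: powr_half_sqrt)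
  finally have powr32: "\<epsilon> powr (3/2) = \<epsilon> * sqrt \<epsilon>" .
  then have "(\<epsilon> powr (3/4))^2 = \<epsilon> * sqrt \<epsilon>"
    using \<open>\<epsilon> > 0\<close> by (simp add: powr_power)
  note powr = powr32 this
  have root: "(root 4 2)^2 = sqrt (2::real)"
    by (simp add: root_powr_inverse powr_power powr_half_sqrt[symmetric])
  show "\<delta> \<le> \<epsilon> * sqrt \<epsilon> * sqrt L / (96 * sqrt (real n) * P^2)"
    using \<delta> by (simp add: powr)
  have "\<delta>^2 \<le> (\<epsilon> powr (3/4) * sqrt L / (4 * root 4 2 * sqrt (real n * P)))^2"
    using \<delta> \<open>0 \<le> \<delta>\<close> by (intro power_mono) auto
  also have "\<dots> \<le> \<epsilon> * sqrt \<epsilon> * L / (16 * sqrt 2 * real n * P)"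
    using \<open>P > 0\<close> \<open>L > 0\<close> by (simp add: power_divide power_mult_distrib powr root mult.assoc)
  finally show "\<delta>^2 \<le> \<epsilon> * sqrt \<epsilon> * L / (16 * sqrt 2 * real n * P)" .
qed


section \<open>Bounded random variables\<close>

lemma bounded_image_const: "bounded ((\<lambda>x. c) ` S)"
  by (cases "S = {}") (simp_all add: image_constant_conv)

lemma (in bounded_bilinear) bounded_image_prod:
  assumes "bounded (f ` S)" "bounded (g ` S)"
  shows "bounded ((\<lambda>x. prod (f x) (g x)) ` S)"
proof -
  obtain K where K: "\<And>a b. norm (prod a b) \<le> norm a * norm b * K" "0 \<le> K"
    using nonneg_bounded by blast
  obtain B C where "\<And>x. x \<in> S \<Longrightarrow> norm (f x) \<le> B" "\<And>x. x \<in> S \<Longrightarrow> norm (g x) \<le> C"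
    using assms by (auto simp: bounded_iff)
  then have "norm (prod (f x) (g x)) \<le> B * C * K" if "x \<in> S" for x
    using K that by (meson mult_mono mult_right_mono norm_ge_zero order_trans)
  then show ?thesis
    by (auto simp: bounded_iff)
qed

lemmas bounded_image_mult = bounded_bilinear.bounded_image_prod[OF bounded_bilinear_mult]
lemmas bounded_image_inner = bounded_bilinear.bounded_image_prod[OF bounded_bilinear_inner]
lemmas bounded_image_scaleR = bounded_bilinear.bounded_image_prod[OF bounded_bilinear_scaleR]

lemma bounded_image_power2: "bounded (f ` S) \<Longrightarrow> bounded ((\<lambda>x. (f x)^2 :: real) ` S)"
  unfolding power2_eq_square by (rule bounded_image_mult)

lemma bounded_image_divide: "bounded (f ` S) \<Longrightarrow> bounded ((\<lambda>x. f x / c :: real) ` S)"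
  unfolding divide_inverse by (intro bounded_image_mult bounded_image_const)

lemma bounded_image_abs: "bounded (f ` S) \<Longrightarrow> bounded ((\<lambda>x. \<bar>f x\<bar> :: real) ` S)"
  using bounded_norm_comp[of f S] by (simp add: real_norm_def)

lemma bounded_image_norm: "bounded (f ` S) \<Longrightarrow> bounded ((\<lambda>x. norm (f x)) ` S)"
  by (simp add: bounded_norm_comp)

lemma bounded_image_continuous_comp:
  fixes g :: "'a::heine_borel \<Rightarrow> 'b::metric_space"
  assumes "continuous_on UNIV g" "bounded (V ` S)"
  shows "bounded ((\<lambda>x. g (V x)) ` S)"
proof -
  have "compact (g ` closure (V ` S))"
    using assms by (intro compact_continuous_image continuous_on_subset[OF assms(1)]) auto
  then show ?thesis
    by (rule bounded_subset[OF compact_imp_bounded]) (auto intro: closure_subset[THEN subsetD])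
qed

lemmas bounded_image_intros = bounded_image_const bounded_plus_comp bounded_minus_comp
  bounded_image_mult bounded_image_inner bounded_image_scaleR bounded_image_power2
  bounded_image_divide bounded_image_abs bounded_image_norm

lemma (in finite_measure) integrable_bounded_image:
  fixes g :: "'a \<Rightarrow> 'b::{banach, second_countable_topology}"
  assumes "g \<in> borel_measurable M" "bounded (g ` space M)"
  shows "integrable M g"
proof -
  obtain K where "\<And>x. x \<in> space M \<Longrightarrow> norm (g x) \<le> K"
    using assms(2) by (auto simp: bounded_iff)
  then show ?thesis
    by (intro integrable_const_bound[OF _ assms(1)]) auto
qed

lemma (in prob_space) integral_abs_le_sqrt_integral_sq:
  fixes g :: "'a \<Rightarrow> real"
  assumes "integrable M g" "integrable M (\<lambda>x. (g x)^2)"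
  shows "(\<integral>x. \<bar>g x\<bar> \<partial>M) \<le> sqrt (\<integral>x. (g x)^2 \<partial>M)"
proof (rule real_le_rsqrt)
  show "(\<integral>x. \<bar>g x\<bar> \<partial>M)^2 \<le> (\<integral>x. (g x)^2 \<partial>M)"
    using jensens_inequality[of "\<lambda>x. \<bar>g x\<bar>" UNIV _ _ power2] assms convex_power2 by simp
qed

lemma borel_measurable_vec_nth [measurable]: "(\<lambda>x::real^'n. x $ i) \<in> borel_measurable borel"
  by (intro borel_measurable_continuous_onI continuous_on_component continuous_on_id)

lemma (in prob_space) integral_inner_isotropic_direction:
  fixes V W E :: "'a \<Rightarrow> real^'n"
  assumes "sigma_finite_subalgebra M F"
    and VW: "V \<in> borel_measurable F" "W \<in> borel_measurable F"
    and [measurable]: "E \<in> borel_measurable M"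
    and bounded: "bounded (V ` space M)" "bounded (W ` space M)" "bounded (E ` space M)"
    and isotropic: "\<And>i j. AE \<omega> in M. real_cond_exp M F (\<lambda>\<omega>. E \<omega> $ i * E \<omega> $ j) \<omega>
      = (if i = j then 1 / real CARD('n) else 0)"
  shows "(\<integral>\<omega>. (V \<omega> \<bullet> E \<omega>) * (E \<omega> \<bullet> W \<omega>) \<partial>M) = (\<integral>\<omega>. V \<omega> \<bullet> W \<omega> \<partial>M) / real CARD('n)"
proof -
  interpret sigma_finite_subalgebra M F by fact
  have [measurable]: "V \<in> borel_measurable M" "W \<in> borel_measurable M"
    using VW measurable_from_subalg[OF subalg] by blast+
  have VW_ij: "(\<lambda>\<omega>. V \<omega> $ i * W \<omega> $ j) \<in> borel_measurable F" for i j
    using VW by measurable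
  have component: "bounded ((\<lambda>\<omega>. X \<omega> $ i) ` space M)" if "bounded (X ` space M)" for X :: "'a \<Rightarrow> real^'n" and i
    using bounded_linear_image[OF that bounded_linear_vec_nth] by (simp add: image_image)
  have int_ij: "integrable M (\<lambda>\<omega>. V \<omega> $ i * W \<omega> $ j * (E \<omega> $ i * E \<omega> $ j))" for i j
    by (intro integrable_bounded_image bounded_image_mult component bounded) measurable
  have "(\<integral>\<omega>. V \<omega> $ i * W \<omega> $ j * (E \<omega> $ i * E \<omega> $ j) \<partial>M)
      = (if i = j then (\<integral>\<omega>. V \<omega> $ i * W \<omega> $ j \<partial>M) / real CARD('n) else 0)" for i j
  proof -
    have "(\<integral>\<omega>. V \<omega> $ i * W \<omega> $ j * (E \<omega> $ i * E \<omega> $ j) \<partial>M)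
        = (\<integral>\<omega>. V \<omega> $ i * W \<omega> $ j * real_cond_exp M F (\<lambda>\<omega>. E \<omega> $ i * E \<omega> $ j) \<omega> \<partial>M)"
      by (rule real_cond_exp_intg(2)[symmetric]) (use int_ij VW_ij in auto)
    also have "\<dots> = (\<integral>\<omega>. V \<omega> $ i * W \<omega> $ j * (if i = j then 1 / real CARD('n) else 0) \<partial>M)"
      by (rule integral_cong_AE) (use isotropic[of i j] in auto)
    finally show ?thesis
      by simp
  qed
  moreover have "(V \<omega> \<bullet> E \<omega>) * (E \<omega> \<bullet> W \<omega>)
      = (\<Sum>i\<in>UNIV. \<Sum>j\<in>UNIV. V \<omega> $ i * W \<omega> $ j * (E \<omega> $ i * E \<omega> $ j))" for \<omega>
    unfolding inner_vec_def sum_product by (simp add: ac_simps)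
  moreover have "integrable M (\<lambda>\<omega>. V \<omega> $ i * W \<omega> $ i)" for i
    by (intro integrable_bounded_image bounded_image_mult component bounded) measurable
  ultimately show ?thesis
    using int_ij by (simp add: integral_sum sum.delta sum_divide_distrib inner_vec_def)
qed


section \<open>The method with random directions\<close>

locale inexact_mtm =
  fixes f :: "real^'n \<Rightarrow> real" and gradf :: "real^'n \<Rightarrow> real^'n"
    and L :: real and xstar x0 :: "real^'n"
    and M :: "'a measure" and F :: "nat \<Rightarrow> 'a measure"
    and e :: "nat \<Rightarrow> 'a \<Rightarrow> real^'n" and dl :: "nat \<Rightarrow> 'a \<Rightarrow> real"
    and \<delta> :: real
  assumes L_pos: "L > 0"
    and convex: "convex_on UNIV f"
    and grad: "\<And>x. (f has_derivative (\<lambda>h. gradf x \<bullet> h)) (at x)"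
    and lip: "\<And>x y. norm (gradf x - gradf y) \<le> L * norm (x - y)"
    and min: "\<And>x. f xstar \<le> f x"
    and prob: "prob_space M"
    and subalg: "\<And>k. subalgebra M (F k)"
    and filt: "\<And>k. sets (F k) \<subseteq> sets (F (Suc k))"
    and e_meas: "\<And>k. e (Suc k) \<in> borel_measurable (F (Suc k))"
    and dl_meas: "\<And>k. dl (Suc k) \<in> borel_measurable (F (Suc k))"
    and e_unit: "\<And>k \<omega>. \<omega> \<in> space M \<Longrightarrow> norm (e (Suc k) \<omega>) = 1"
    and e_cond: "\<And>k i j. AE \<omega> in M.
        real_cond_exp M (F k) (\<lambda>\<omega>. e (Suc k) \<omega> $ i * e (Suc k) \<omega> $ j) \<omega>
          = (if i = j then 1 / real CARD('n) else 0)"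
    and dl_bound: "\<And>k \<omega>. \<omega> \<in> space M \<Longrightarrow> \<bar>dl (Suc k) \<omega>\<bar> \<le> \<delta>"
begin

definition X :: "nat \<Rightarrow> 'a \<Rightarrow> real^'n" where
  "X k \<omega> = fst (mtm L gradf x0 (\<lambda>k. e k \<omega>) (\<lambda>k. dl k \<omega>) k)"

definition U :: "nat \<Rightarrow> 'a \<Rightarrow> real^'n" where
  "U k \<omega> = snd (mtm L gradf x0 (\<lambda>k. e k \<omega>) (\<lambda>k. dl k \<omega>) k)"

definition Y :: "nat \<Rightarrow> 'a \<Rightarrow> real^'n" where
  "Y k \<omega> = mtm_y CARD('n) k (X k \<omega>) (U k \<omega>)"

definition Phi :: "nat \<Rightarrow> 'a \<Rightarrow> real" where
  "Phi k \<omega> = mtm_A CARD('n) k * (f (X k \<omega>) - f xstar) + L/2 * (norm (U k \<omega> - xstar))^2"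

definition EPhi :: "nat \<Rightarrow> real" where
  "EPhi k = (\<integral>\<omega>. Phi k \<omega> \<partial>M)"

lemma card_ge_1: "CARD('n) \<ge> 1"
  by (simp add: Suc_leI)

lemma X_0: "X 0 \<omega> = x0" and U_0: "U 0 \<omega> = x0"
  by (simp_all add: X_def U_def)

lemma XU_Suc: "(X (Suc k) \<omega>, U (Suc k) \<omega>) = mtm_step L gradf k (X k \<omega>, U k \<omega>) (e (Suc k) \<omega>) (dl (Suc k) \<omega>)"
  by (simp add: X_def U_def)

lemma X_Suc: "X (Suc k) \<omega> = Y k \<omega>
    - ((real CARD('n))^2 * (mtm_alpha CARD('n) (Suc k))^2 / L
        * (gradf (Y k \<omega>) \<bullet> e (Suc k) \<omega> + dl (Suc k) \<omega>) / mtm_A CARD('n) (Suc k)) *\<^sub>R e (Suc k) \<omega>"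
  and U_Suc: "U (Suc k) \<omega> = U k \<omega>
    - (mtm_alpha CARD('n) (Suc k) * real CARD('n)
        * (gradf (Y k \<omega>) \<bullet> e (Suc k) \<omega> + dl (Suc k) \<omega>) / L) *\<^sub>R e (Suc k) \<omega>"
  using XU_Suc[of k \<omega>] by (simp_all add: mtm_step_eq[OF L_pos] Y_def)

lemma delta_nonneg: "0 \<le> \<delta>"
  using prob_space.not_empty[OF prob] dl_bound[of _ 0] by force

lemma sigma_finite_subalgebra_F: "sigma_finite_subalgebra M (F k)"
  unfolding sigma_finite_subalgebra_def
  using subalg finite_measure_restr_to_subalg[OF subalg prob_space.finite_measure[OF prob]]
  by (simp add: finite_measure_def)

lemma f_continuous: "continuous_on UNIV f"
  by (intro continuous_at_imp_continuous_on ballI has_derivative_continuous[OF grad])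

lemma gradf_continuous: "continuous_on UNIV gradf"
  by (rule lipschitz_on_continuous_on[of L]) (use lip L_pos in \<open>auto simp: lipschitz_on_def dist_norm\<close>)

lemma f_measurable [measurable]: "f \<in> borel_measurable borel"
  by (rule borel_measurable_continuous_onI[OF f_continuous])

lemma gradf_measurable [measurable]: "gradf \<in> borel_measurable borel"
  by (rule borel_measurable_continuous_onI[OF gradf_continuous])

lemma XU_measurable_F: "X k \<in> borel_measurable (F k) \<and> U k \<in> borel_measurable (F k)"
proof (induction k)
  case 0
  show ?case
    by (simp add: X_0[abs_def] U_0[abs_def])
next
  case (Suc k)
  have "subalgebra (F (Suc k)) (F k)"
    using subalg filt by (simp add: subalgebra_def)
  then have [measurable]: "X k \<in> borel_measurable (F (Suc k))" "U k \<in> borel_measurable (F (Suc k))"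
    using Suc measurable_from_subalg by blast+
  note [measurable] = e_meas[of k] dl_meas[of k]
  show ?case
    unfolding X_Suc[abs_def] U_Suc[abs_def] Y_def[abs_def] mtm_y_def by measurable
qed

lemma X_measurable_F [measurable]: "X k \<in> borel_measurable (F k)"
  and U_measurable_F [measurable]: "U k \<in> borel_measurable (F k)"
  using XU_measurable_F by blast+

lemma Y_measurable_F [measurable]: "Y k \<in> borel_measurable (F k)"
  unfolding Y_def[abs_def] mtm_y_def by measurable

lemma borel_measurable_M: "g \<in> borel_measurable (F k) \<Longrightarrow> g \<in> borel_measurable M"
  using measurable_from_subalg[OF subalg] by blast

lemma X_measurable [measurable]: "X k \<in> borel_measurable M"
  and U_measurable [measurable]: "U k \<in> borel_measurable M"
  and Y_measurable [measurable]: "Y k \<in> borel_measurable M"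
  and e_measurable [measurable]: "e (Suc k) \<in> borel_measurable M"
  and dl_measurable [measurable]: "dl (Suc k) \<in> borel_measurable M"
  by (rule borel_measurable_M, rule X_measurable_F U_measurable_F Y_measurable_F e_meas dl_meas)+

lemma bounded_e: "bounded (e (Suc k) ` space M)"
  unfolding bounded_iff using e_unit by (intro exI[of _ 1]) simp

lemma bounded_dl: "bounded (dl (Suc k) ` space M)"
  unfolding bounded_iff using dl_bound by (intro exI[of _ \<delta>]) simp

lemma bounded_gradf: "bounded (V ` space M) \<Longrightarrow> bounded ((\<lambda>\<omega>. gradf (V \<omega>)) ` space M)"
  by (rule bounded_image_continuous_comp[OF gradf_continuous])

lemma bounded_f: "bounded (V ` space M) \<Longrightarrow> bounded ((\<lambda>\<omega>. f (V \<omega>)) ` space M)"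
  by (rule bounded_image_continuous_comp[OF f_continuous])

lemma bounded_XU: "bounded (X k ` space M) \<and> bounded (U k ` space M)"
proof (induction k)
  case 0
  show ?case
    by (simp add: X_0 U_0 bounded_image_const)
next
  case (Suc k)
  then have "bounded (Y k ` space M)"
    unfolding Y_def mtm_y_def by (intro bounded_image_intros) blast+
  with Suc show ?case
    unfolding X_Suc[abs_def] U_Suc[abs_def]
    by (intro conjI bounded_image_intros bounded_gradf bounded_e bounded_dl) blast+
qed

lemma bounded_X: "bounded (X k ` space M)"
  and bounded_U: "bounded (U k ` space M)"
  using bounded_XU by blast+

lemma bounded_Y: "bounded (Y k ` space M)"
  unfolding Y_def mtm_y_def by (intro bounded_image_intros bounded_X bounded_U)

lemma Phi_Suc_le:
  fixes k :: nat and \<omega> :: 'a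
  assumes "\<omega> \<in> space M"
  defines "n \<equiv> real CARD('n)" and "\<alpha> \<equiv> mtm_alpha CARD('n) (Suc k)"
    and "E \<equiv> e (Suc k) \<omega>" and "G \<equiv> gradf (Y k \<omega>)" and "W \<equiv> U k \<omega> - xstar"
  shows "Phi (Suc k) \<omega> \<le> Phi k \<omega> + \<alpha> * (G \<bullet> W) - \<alpha> * n * (G \<bullet> E) * (E \<bullet> W)
    + \<alpha> * n * \<delta> * \<bar>E \<bullet> W\<bar> + n^2 * \<alpha>^2 / L * \<delta> * \<bar>G \<bullet> E\<bar> + n^2 * \<alpha>^2 / L * \<delta>^2"
  using mtm_step_potential_le[OF L_pos convex grad lip e_unit[OF assms(1), of k] dl_bound[OF assms(1), of k],
      where k=k and x="X k \<omega>" and u="U k \<omega>" and z=xstar]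
  unfolding Phi_def XU_Suc[symmetric] assms(2-) Y_def[symmetric] by simp

lemma integrable_bounded_image_M:
  "g \<in> borel_measurable M \<Longrightarrow> bounded (g ` space M) \<Longrightarrow> integrable M (g :: 'a \<Rightarrow> real)"
  by (rule finite_measure.integrable_bounded_image[OF prob_space.finite_measure[OF prob]])

lemma integrable_Phi: "integrable M (Phi k)"
  unfolding Phi_def[abs_def]
  by (intro integrable_bounded_image_M bounded_image_intros bounded_f bounded_X bounded_U) measurable

lemma integral_inner_e_Suc:
  assumes "V \<in> borel_measurable (F k)" "W \<in> borel_measurable (F k)"
    and "bounded (V ` space M)" "bounded (W ` space M)"
  shows "(\<integral>\<omega>. (V \<omega> \<bullet> e (Suc k) \<omega>) * (e (Suc k) \<omega> \<bullet> W \<omega>) \<partial>M) = (\<integral>\<omega>. V \<omega> \<bullet> W \<omega> \<partial>M) / real CARD('n)"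
  by (rule prob_space.integral_inner_isotropic_direction[OF prob sigma_finite_subalgebra_F assms(1,2)
        e_measurable assms(3,4) bounded_e e_cond])

lemma integral_abs_inner_e_le:
  assumes [measurable]: "V \<in> borel_measurable (F k)" and "bounded (V ` space M)"
  shows "(\<integral>\<omega>. \<bar>e (Suc k) \<omega> \<bullet> V \<omega>\<bar> \<partial>M) \<le> sqrt ((\<integral>\<omega>. (norm (V \<omega>))^2 \<partial>M) / real CARD('n))"
proof -
  have [measurable]: "V \<in> borel_measurable M"
    by (rule borel_measurable_M) measurable
  have "(\<integral>\<omega>. (e (Suc k) \<omega> \<bullet> V \<omega>)^2 \<partial>M) = (\<integral>\<omega>. (V \<omega> \<bullet> e (Suc k) \<omega>) * (e (Suc k) \<omega> \<bullet> V \<omega>) \<partial>M)"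
    by (simp add: power2_eq_square inner_commute)
  also have "\<dots> = (\<integral>\<omega>. (norm (V \<omega>))^2 \<partial>M) / real CARD('n)"
    using integral_inner_e_Suc[OF assms(1,1,2,2)] by (simp add: power2_norm_eq_inner)
  finally show ?thesis
    using prob_space.integral_abs_le_sqrt_integral_sq[OF prob, of "\<lambda>\<omega>. e (Suc k) \<omega> \<bullet> V \<omega>"]
      prob_space.finite_measure[OF prob] assms(2)
    by (simp add: finite_measure.integrable_bounded_image bounded_image_intros bounded_e)
qed

lemma EPhi_Suc_le_noise:
  fixes k :: nat
  defines "n \<equiv> real CARD('n)" and "\<alpha> \<equiv> mtm_alpha CARD('n) (Suc k)"
  shows "EPhi (Suc k) \<le> EPhi k + \<alpha> * n * \<delta> * (\<integral>\<omega>. \<bar>e (Suc k) \<omega> \<bullet> (U k \<omega> - xstar)\<bar> \<partial>M)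
    + n^2 * \<alpha>^2 / L * \<delta> * (\<integral>\<omega>. \<bar>e (Suc k) \<omega> \<bullet> gradf (Y k \<omega>)\<bar> \<partial>M) + n^2 * \<alpha>^2 / L * \<delta>^2"
proof -
  define E where "E = e (Suc k)"
  define G where "G \<omega> = gradf (Y k \<omega>)" for \<omega>
  define W where "W \<omega> = U k \<omega> - xstar" for \<omega>
  have [measurable]: "G \<in> borel_measurable (F k)" "W \<in> borel_measurable (F k)"
    "G \<in> borel_measurable M" "W \<in> borel_measurable M" "E \<in> borel_measurable M"
    unfolding G_def[abs_def] W_def[abs_def] E_def by measurable
  have bounded: "bounded (G ` space M)" "bounded (W ` space M)" "bounded (E ` space M)"
    unfolding G_def W_def E_def by (intro bounded_gradf bounded_image_intros bounded_Y bounded_U bounded_e)+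
  have [simp]: "integrable M (\<lambda>\<omega>. G \<omega> \<bullet> W \<omega>)" "integrable M (\<lambda>\<omega>. (G \<omega> \<bullet> E \<omega>) * (E \<omega> \<bullet> W \<omega>))"
    "integrable M (\<lambda>\<omega>. \<bar>E \<omega> \<bullet> W \<omega>\<bar>)" "integrable M (\<lambda>\<omega>. \<bar>G \<omega> \<bullet> E \<omega>\<bar>)"
    by (intro integrable_bounded_image_M bounded_image_intros bounded; measurable)+
  have fm: "finite_measure M"
    by (rule prob_space.finite_measure[OF prob])
  have "EPhi (Suc k) \<le> (\<integral>\<omega>. Phi k \<omega> + \<alpha> * (G \<omega> \<bullet> W \<omega>) - \<alpha> * n * ((G \<omega> \<bullet> E \<omega>) * (E \<omega> \<bullet> W \<omega>))
      + \<alpha> * n * \<delta> * \<bar>E \<omega> \<bullet> W \<omega>\<bar> + n^2 * \<alpha>^2 / L * \<delta> * \<bar>G \<omega> \<bullet> E \<omega>\<bar> + n^2 * \<alpha>^2 / L * \<delta>^2 \<partial>M)"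
  proof (unfold EPhi_def, intro integral_mono integrable_Phi)
    show "integrable M (\<lambda>\<omega>. Phi k \<omega> + \<alpha> * (G \<omega> \<bullet> W \<omega>) - \<alpha> * n * ((G \<omega> \<bullet> E \<omega>) * (E \<omega> \<bullet> W \<omega>))
      + \<alpha> * n * \<delta> * \<bar>E \<omega> \<bullet> W \<omega>\<bar> + n^2 * \<alpha>^2 / L * \<delta> * \<bar>G \<omega> \<bullet> E \<omega>\<bar> + n^2 * \<alpha>^2 / L * \<delta>^2)"
      using fm by (intro Bochner_Integration.integrable_add Bochner_Integration.integrable_diff
          integrable_mult_right integrable_Phi finite_measure.integrable_const) simp_all
    show "Phi (Suc k) \<omega> \<le> Phi k \<omega> + \<alpha> * (G \<omega> \<bullet> W \<omega>) - \<alpha> * n * ((G \<omega> \<bullet> E \<omega>) * (E \<omega> \<bullet> W \<omega>))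
      + \<alpha> * n * \<delta> * \<bar>E \<omega> \<bullet> W \<omega>\<bar> + n^2 * \<alpha>^2 / L * \<delta> * \<bar>G \<omega> \<bullet> E \<omega>\<bar> + n^2 * \<alpha>^2 / L * \<delta>^2"
      if "\<omega> \<in> space M" for \<omega>
      using Phi_Suc_le[OF that, of k, folded n_def \<alpha>_def E_def G_def W_def] by (simp add: mult.assoc)
  qed
  also have "\<dots> = EPhi k + \<alpha> * (\<integral>\<omega>. G \<omega> \<bullet> W \<omega> \<partial>M) - \<alpha> * n * (\<integral>\<omega>. (G \<omega> \<bullet> E \<omega>) * (E \<omega> \<bullet> W \<omega>) \<partial>M)
      + \<alpha> * n * \<delta> * (\<integral>\<omega>. \<bar>E \<omega> \<bullet> W \<omega>\<bar> \<partial>M) + n^2 * \<alpha>^2 / L * \<delta> * (\<integral>\<omega>. \<bar>G \<omega> \<bullet> E \<omega>\<bar> \<partial>M)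
      + n^2 * \<alpha>^2 / L * \<delta>^2"
    using integrable_Phi prob_space.prob_space[OF prob] fm
    by (simp add: EPhi_def Bochner_Integration.integrable_add Bochner_Integration.integrable_diff finite_measure.integrable_const)
  \<comment> \<open>the cross term vanishes in expectation\<close>
  also have "(\<integral>\<omega>. (G \<omega> \<bullet> E \<omega>) * (E \<omega> \<bullet> W \<omega>) \<partial>M) = (\<integral>\<omega>. G \<omega> \<bullet> W \<omega> \<partial>M) / n"
    unfolding E_def n_def by (intro integral_inner_e_Suc bounded) measurable
  finally show ?thesis
    by (simp add: E_def G_def W_def n_def inner_commute)
qed

lemma integral_norm_sq_U_le: "(\<integral>\<omega>. (norm (U k \<omega> - xstar))^2 \<partial>M) \<le> 2 / L * EPhi k"
proof -
  have "(norm (U k \<omega> - xstar))^2 \<le> 2 / L * Phi k \<omega>" for \<omega>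
  proof -
    have "0 \<le> mtm_A CARD('n) k * (f (X k \<omega>) - f xstar)"
      using mtm_A_nonneg[OF card_ge_1] min by simp
    then show ?thesis
      using L_pos by (simp add: Phi_def field_simps)
  qed
  moreover have "integrable M (\<lambda>\<omega>. (norm (U k \<omega> - xstar))^2)"
    by (intro integrable_bounded_image_M bounded_image_intros bounded_U) measurable
  ultimately have "(\<integral>\<omega>. (norm (U k \<omega> - xstar))^2 \<partial>M) \<le> (\<integral>\<omega>. 2 / L * Phi k \<omega> \<partial>M)"
    using integrable_Phi by (intro integral_mono) auto
  then show ?thesis
    by (simp add: EPhi_def)
qed

lemma integral_norm_sq_gradf_Y_le:
  "(\<integral>\<omega>. (norm (gradf (Y k \<omega>)))^2 \<partial>M)
    \<le> 2 * L * (1 + mtm_alpha CARD('n) (Suc k)) / mtm_A CARD('n) (Suc k) * EPhi k"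
proof -
  have "(norm (gradf (Y k \<omega>)))^2
      \<le> 2 * L * (1 + mtm_alpha CARD('n) (Suc k)) / mtm_A CARD('n) (Suc k) * Phi k \<omega>" for \<omega>
  proof -
    have "mtm_A CARD('n) (Suc k) *\<^sub>R Y k \<omega> = mtm_alpha CARD('n) (Suc k) *\<^sub>R U k \<omega> + mtm_A CARD('n) k *\<^sub>R X k \<omega>"
      using mtm_A_Suc_pos[OF card_ge_1, of k] by (simp add: Y_def mtm_y_def)
    then show ?thesis
      using norm_gradient_sq_le_potential[OF grad lip convex L_pos min mtm_A_nonneg[OF card_ge_1]
          mtm_alpha_Suc_pos[OF card_ge_1]]
      by (simp add: Phi_def mtm_A_Suc)
  qed
  moreover have "integrable M (\<lambda>\<omega>. (norm (gradf (Y k \<omega>)))^2)"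
    by (intro integrable_bounded_image_M bounded_image_intros bounded_gradf bounded_Y) measurable
  ultimately have "(\<integral>\<omega>. (norm (gradf (Y k \<omega>)))^2 \<partial>M)
      \<le> (\<integral>\<omega>. 2 * L * (1 + mtm_alpha CARD('n) (Suc k)) / mtm_A CARD('n) (Suc k) * Phi k \<omega> \<partial>M)"
    using integrable_Phi by (intro integral_mono) auto
  then show ?thesis
    by (simp add: EPhi_def)
qed

lemma EPhi_nonneg: "0 \<le> EPhi k"
  unfolding EPhi_def Phi_def using mtm_A_nonneg[OF card_ge_1] min L_pos
  by (intro Bochner_Integration.integral_nonneg) simp

lemma EPhi_Suc_le:
  fixes k :: nat
  defines "n \<equiv> real CARD('n)" and "\<alpha> \<equiv> mtm_alpha CARD('n) (Suc k)"
  shows "EPhi (Suc k) \<le> EPhi k + \<delta> * (2 * \<alpha> * sqrt (2 * n * (1 + \<alpha>) / L)) * sqrt (EPhi k)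
    + n^2 * \<alpha>^2 / L * \<delta>^2"
proof -
  define A' where "A' = mtm_A CARD('n) (Suc k)"
  have "0 < \<alpha>" "0 < n" "0 < A'"
    unfolding \<alpha>_def n_def A'_def using mtm_alpha_Suc_pos[OF card_ge_1] mtm_A_Suc_pos[OF card_ge_1]
    by auto
  have "(\<integral>\<omega>. \<bar>e (Suc k) \<omega> \<bullet> (U k \<omega> - xstar)\<bar> \<partial>M) \<le> sqrt ((\<integral>\<omega>. (norm (U k \<omega> - xstar))^2 \<partial>M) / n)"
    unfolding n_def by (intro integral_abs_inner_e_le bounded_image_intros bounded_U) measurable
  also have "\<dots> \<le> sqrt (2 / L * EPhi k / n)"
    using integral_norm_sq_U_le[of k] \<open>0 < n\<close> by (intro real_sqrt_le_mono divide_right_mono) auto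
  also have "\<dots> = sqrt (2 / (L * n)) * sqrt (EPhi k)"
    by (simp add: real_sqrt_mult[symmetric])
  finally have 1: "(\<integral>\<omega>. \<bar>e (Suc k) \<omega> \<bullet> (U k \<omega> - xstar)\<bar> \<partial>M) \<le> sqrt (2 / (L * n)) * sqrt (EPhi k)" .
  have "(\<integral>\<omega>. \<bar>e (Suc k) \<omega> \<bullet> gradf (Y k \<omega>)\<bar> \<partial>M) \<le> sqrt ((\<integral>\<omega>. (norm (gradf (Y k \<omega>)))^2 \<partial>M) / n)"
    unfolding n_def by (intro integral_abs_inner_e_le bounded_gradf bounded_Y) measurable
  also have "\<dots> \<le> sqrt (2 * L * (1 + \<alpha>) / A' * EPhi k / n)"
    using integral_norm_sq_gradf_Y_le[of k] \<open>0 < n\<close>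
    by (intro real_sqrt_le_mono divide_right_mono) (auto simp: \<alpha>_def A'_def)
  also have "\<dots> = sqrt (2 * L * (1 + \<alpha>) / (A' * n)) * sqrt (EPhi k)"
    by (simp add: real_sqrt_mult[symmetric])
  finally have 2: "(\<integral>\<omega>. \<bar>e (Suc k) \<omega> \<bullet> gradf (Y k \<omega>)\<bar> \<partial>M)
      \<le> sqrt (2 * L * (1 + \<alpha>) / (A' * n)) * sqrt (EPhi k)" .
  have "0 \<le> \<alpha> * n * \<delta>" "0 \<le> n^2 * \<alpha>^2 / L * \<delta>"
    using \<open>0 < \<alpha>\<close> \<open>0 < n\<close> L_pos delta_nonneg by simp_all
  from mult_left_mono[OF 1 this(1)] mult_left_mono[OF 2 this(2)]
  have "\<alpha> * n * \<delta> * (\<integral>\<omega>. \<bar>e (Suc k) \<omega> \<bullet> (U k \<omega> - xstar)\<bar> \<partial>M)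
      + n^2 * \<alpha>^2 / L * \<delta> * (\<integral>\<omega>. \<bar>e (Suc k) \<omega> \<bullet> gradf (Y k \<omega>)\<bar> \<partial>M)
    \<le> \<alpha> * n * \<delta> * (sqrt (2 / (L * n)) * sqrt (EPhi k))
      + n^2 * \<alpha>^2 / L * \<delta> * (sqrt (2 * L * (1 + \<alpha>) / (A' * n)) * sqrt (EPhi k))"
    by (rule add_mono)
  also have "\<dots> = \<delta> * (\<alpha> * n * sqrt (2 / (L * n)) + n^2 * \<alpha>^2 / L * sqrt (2 * L * (1 + \<alpha>) / (A' * n)))
      * sqrt (EPhi k)"
    by (simp add: algebra_simps)
  also have "\<dots> \<le> \<delta> * (2 * \<alpha> * sqrt (2 * n * (1 + \<alpha>) / L)) * sqrt (EPhi k)"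
    using mtm_noise_coefficient_le[OF card_ge_1 L_pos, of k] delta_nonneg EPhi_nonneg
    by (intro mult_right_mono mult_left_mono) (simp_all add: n_def \<alpha>_def A'_def)
  finally show ?thesis
    using EPhi_Suc_le_noise[of k] unfolding n_def[symmetric] \<alpha>_def[symmetric] by linarith
qed

lemma EPhi_0: "EPhi 0 = (1 - 1 / real CARD('n)) * (f x0 - f xstar) + L/2 * (norm (x0 - xstar))^2"
  using prob_space.prob_space[OF prob] by (simp add: EPhi_def Phi_def X_0 U_0 mtm_A_def)

lemma sqrt_EPhi_le:
  "sqrt (EPhi N) \<le> sqrt (EPhi 0 + (\<Sum>k<N. (real CARD('n))^2 * (mtm_alpha CARD('n) (Suc k))^2 / L * \<delta>^2))
    + \<delta>/2 * (\<Sum>k<N. 2 * mtm_alpha CARD('n) (Suc k)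
        * sqrt (2 * real CARD('n) * (1 + mtm_alpha CARD('n) (Suc k)) / L))"
  using L_pos mtm_alpha_Suc_pos[OF card_ge_1]
  by (intro sqrt_le_of_recurrence EPhi_nonneg delta_nonneg) (auto intro: EPhi_Suc_le[THEN order_trans])

lemma mtm_A_mult_expected_gap_le: "mtm_A CARD('n) N * ((\<integral>\<omega>. f (X N \<omega>) \<partial>M) - f xstar) \<le> EPhi N"
proof -
  have "integrable M (\<lambda>\<omega>. f (X N \<omega>))"
    by (intro integrable_bounded_image_M bounded_f bounded_X) measurable
  then have "mtm_A CARD('n) N * ((\<integral>\<omega>. f (X N \<omega>) \<partial>M) - f xstar)
      = (\<integral>\<omega>. mtm_A CARD('n) N * (f (X N \<omega>) - f xstar) \<partial>M)"
    using prob_space.prob_space[OF prob] prob_space.finite_measure[OF prob]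
    by (simp add: right_diff_distrib Bochner_Integration.integral_diff finite_measure.integrable_const)
  also have "\<dots> \<le> EPhi N"
    unfolding EPhi_def using integrable_Phi \<open>integrable M (\<lambda>\<omega>. f (X N \<omega>))\<close> prob_space.finite_measure[OF prob] L_pos
    by (intro integral_mono) (auto simp: Phi_def finite_measure.integrable_const)
  finally show ?thesis .
qed

lemma expected_gap_le:
  fixes N :: nat
  assumes "\<epsilon> > 0" "N \<ge> 1" "P > 0" "EPhi 0 = P^2 / 2"
    and "sqrt 2 * real CARD('n) * P / sqrt \<epsilon> + 1 - 2 * real CARD('n) \<le> real N"
    and "real N < sqrt 2 * real CARD('n) * P / sqrt \<epsilon> + 2 - 2 * real CARD('n)"
    and "\<delta>^2 \<le> \<epsilon> * sqrt \<epsilon> * L / (16 * sqrt 2 * real CARD('n) * P)"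
    and "\<delta> \<le> \<epsilon> * sqrt \<epsilon> * sqrt L / (96 * sqrt (real CARD('n)) * P^2)"
  shows "(\<integral>\<omega>. f (X N \<omega>) \<partial>M) - f xstar \<le> 3 * \<epsilon>"
proof -
  note A_N = mtm_horizon_bounds(1)[OF card_ge_1 assms(2,1,3,5,6)]
  have "sqrt (EPhi N) \<le> 21/20 * P"
    using sqrt_EPhi_le[of N] mtm_potential_bound[OF card_ge_1 assms(2) L_pos assms(1,3) delta_nonneg assms(5-)]
    unfolding assms(4) by linarith
  then have "EPhi N \<le> (21/20 * P)^2"
    by (rule sqrt_le_D)
  also have "\<dots> \<le> 3 * \<epsilon> * (P^2 / (2 * \<epsilon>))"
    using \<open>\<epsilon> > 0\<close> by (simp add: power2_eq_square)
  also have "\<dots> \<le> 3 * \<epsilon> * mtm_A CARD('n) N"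
    using A_N \<open>\<epsilon> > 0\<close> by (intro mult_left_mono) auto
  finally have "mtm_A CARD('n) N * ((\<integral>\<omega>. f (X N \<omega>) \<partial>M) - f xstar) \<le> mtm_A CARD('n) N * (3 * \<epsilon>)"
    using mtm_A_mult_expected_gap_le[of N] by (simp add: mult.commute)
  moreover have "0 < P^2 / (2 * \<epsilon>)"
    using \<open>\<epsilon> > 0\<close> \<open>P > 0\<close> by simp
  then have "0 < mtm_A CARD('n) N"
    using A_N by linarith
  ultimately show ?thesis
    by simp
qed

end


theorem theorem5:
  fixes f :: "real^'n \<Rightarrow> real" and gradf :: "real^'n \<Rightarrow> real^'n"
    and L :: real and xstar x0 :: "real^'n"
    and M :: "'a measure" and F :: "nat \<Rightarrow> 'a measure"
    and e :: "nat \<Rightarrow> 'a \<Rightarrow> real^'n" and dl :: "nat \<Rightarrow> 'a \<Rightarrow> real"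
    and \<delta> \<epsilon> P0 :: real and N :: int
  assumes L_pos: "L > 0"
    and convex: "convex_on UNIV f"
    and grad: "\<And>x. (f has_derivative (\<lambda>h. gradf x \<bullet> h)) (at x)"
    and lip: "\<And>x y. norm (gradf x - gradf y) \<le> L * norm (x - y)"
    and min: "\<And>x. f xstar \<le> f x"
    and prob: "prob_space M"
    and subalg: "\<And>k. subalgebra M (F k)"
    and filt: "\<And>k. sets (F k) \<subseteq> sets (F (Suc k))"
    and e_meas: "\<And>k. e (Suc k) \<in> borel_measurable (F (Suc k))"
    and dl_meas: "\<And>k. dl (Suc k) \<in> borel_measurable (F (Suc k))"
    and e_unit: "\<And>k \<omega>. \<omega> \<in> space M \<Longrightarrow> norm (e (Suc k) \<omega>) = 1"
    and e_cond: "\<And>k i j. AE \<omega> in M.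
        real_cond_exp M (F k) (\<lambda>\<omega>. e (Suc k) \<omega> $ i * e (Suc k) \<omega> $ j) \<omega>
          = (if i = j then 1 / real CARD('n) else 0)"
    and dl_bound: "\<And>k \<omega>. \<omega> \<in> space M \<Longrightarrow> \<bar>dl (Suc k) \<omega>\<bar> \<le> \<delta>"
    and P0_def: "P0 = sqrt (2 * (1/2 * (normL L (x0 - xstar))^2
                    + (1 - 1 / real CARD('n)) * (f x0 - f xstar)))"
    and eps_pos: "\<epsilon> > 0"
    and N_def: "N = \<lceil>sqrt 2 * real CARD('n) * P0 / sqrt \<epsilon> + 1 - 2 * real CARD('n)\<rceil>"
    and N_ge: "N \<ge> 1"
    and delta_le: "\<delta> \<le> min (\<epsilon> powr (3/4) * sqrt L / (4 * root 4 2 * sqrt (real CARD('n) * P0)))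
                          (\<epsilon> powr (3/2) * sqrt L / (96 * sqrt (real CARD('n)) * P0^2))"
  shows "(\<integral>\<omega>. f (fst (mtm L gradf x0 (\<lambda>k. e k \<omega>) (\<lambda>k. dl k \<omega>) (nat N))) \<partial>M) - f xstar
           \<le> 3 * \<epsilon>"
proof -
  interpret inexact_mtm f gradf L xstar x0 M F e dl \<delta>
    by (rule inexact_mtm.intro) (fact L_pos convex grad lip min prob subalg filt e_meas dl_meas e_unit e_cond dl_bound)+
  define z where "z = sqrt 2 * real CARD('n) * P0 / sqrt \<epsilon> + 1 - 2 * real CARD('n)"
  have "real (nat N) = real_of_int \<lceil>z\<rceil>"
    using N_ge unfolding N_def z_def by simp
  then have lo: "z \<le> real (nat N)" and hi: "real (nat N) < z + 1"
    by linarith+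
  have P0_radicand_nonneg: "0 \<le> 1/2 * (normL L (x0 - xstar))^2 + (1 - 1 / real CARD('n)) * (f x0 - f xstar)"
    using min[of x0] card_ge_1 by (simp add: mult_nonneg_nonneg)
  then have EPhi0: "EPhi 0 = P0^2 / 2"
    unfolding P0_def EPhi_0 using L_pos by (simp add: normL_sq)
  have "P0 \<noteq> 0"
  proof
    assume "P0 = 0"
    with hi have "real (nat N) < 2 - 2 * real CARD('n)"
      unfolding z_def by simp
    with N_ge of_nat_mono[OF card_ge_1, where 'a=real] show False
      by linarith
  qed
  moreover have "0 \<le> P0"
    unfolding P0_def using P0_radicand_nonneg by simp
  ultimately have "P0 > 0"
    by simp
  from expected_gap_le[OF eps_pos _ \<open>P0 > 0\<close> EPhi0 lo[unfolded z_def] _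
      noise_level_bounds[OF eps_pos L_pos \<open>P0 > 0\<close> delta_nonneg delta_le]]
  show ?thesis
    using N_ge hi unfolding z_def X_def by simp
qed

end
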